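(* Assume that the function $\varphi$ described in the context satisfies Conditions (C1), (C2), (C3), (C4). Then the functional $\|u\|_{\mathcal L(\Omega)}:=f(u)$ is a norm on $\mathcal L(\Omega)$, and $\mathcal L(\Omega)$ equipped with this norm is a Banach space. Moreover, the embeddings $$L_{p_+}(\Omega)\cap L_{p_-}(\Omega)\subseteq \mathcal L(\Omega)\subseteq L_{p_-}(\Omega)$$ hold and are continuous (where $L_{p_+}(\Omega)\cap L_{p_-}(\Omega)$ carries its natural intersection norm).
   Context: Let $d\ge 1$ and let $\Omega\subseteq\mathbb R^d$ be a domain (open set, bounded or unbounded, possibly $\Omega=\mathbb R^d$). Functions are complex-valued. Let $a\in L_1(\mathbb R^d)$, $a\ge 0$, and suppose there is a non-empty ball $B_0$ centered at $0$ with $a(z)\ge c_0>0$ for a.e. $z\in B_0$. If $\Omega$ is not connected and $\Omega_1,\Omega_2,\dots$ are its connected components, assume $\operatorname{dist}(\Omega_i,\Omega_{i+1})<\operatorname{diam}B_0$ for all $i$. A real function $r$ on $[0,\infty)$ is almost increasing (resp. almost decreasing) with constant $\beta\ge1$ if $r(s)\le\beta r(t)$ (resp. $\beta r(s)\ge r(t)$) for all $0\le s\le t$. Let $\varphi:[0,\infty)\times\Omega\times\Omega\to[0,\infty)$. Conditions: (C1) for each $u\in L_{1,loc}(\Omega)$ the function $(x,y)\mapsto\varphi(|u(x)-u(y)|,x,y)$ is measurable on $\Omega\times\Omega$; (C2) for every $\varepsilon>0$ there is $\delta\in(0,1)$ such that $\varphi(\frac{s+t}{2},x,y)\le(1-\delta)\frac{\varphi(s,x,y)+\varphi(t,x,y)}{2}$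 for a.e. $(x,y)$ and all $s,t>0$ with $|s-t|\ge\varepsilon\max\{s,t\}$; (C3) there are constants $1<p_-\le p_+$ and $\beta\ge1$ such that for a.e. $(x,y)$ the function $t\mapsto\varphi(t,x,y)/t^{p_-}$ is almost increasing with constant $\beta$ and $t\mapsto\varphi(t,x,y)/t^{p_+}$ is almost decreasing with constant $\beta$; (C4) for a.e. $(x,y)$: $c_1^{-1}\le\varphi(1,x,y)\le c_1$ with a constant $c_1>0$, $\varphi(0,x,y)=0$, and $\varphi(t,x,y)>0$ for $t>0$. Define for $u\in L_{1,loc}(\Omega)$: $F(u)=\int_{\Omega\times\Omega}\varphi(|u(x)-u(y)|,x,y)\,a(x-y)\,dx\,dy\in[0,+\infty]$, $|u|_{p,\Omega}=\inf\{\lambda>0: F(u/\lambda)\le1\}$, $f(u)=|u|_{p,\Omega}+\|u\|_{L_{p_-}(\Omega)}$, and $\mathcal L(\Omega)=\{u\in L_{p_-,loc}(\Omega): f(u)<+\infty\}$. *)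

theory Defs
  imports "HOL-Analysis.Analysis"
begin

text \<open>Functions u are complex-valued on the ambient space 'a (= R^d); only their
values on the domain Omega matter. Lebesgue measure is used throughout.\<close>

definition Lp_integral :: "'a::euclidean_space set \<Rightarrow> real \<Rightarrow> ('a \<Rightarrow> complex) \<Rightarrow> ennreal" where
  "Lp_integral S p u = (\<integral>\<^sup>+ x \<in> S. ennreal (cmod (u x) powr p) \<partial>lebesgue)"

definition Lp_norm :: "'a::euclidean_space set \<Rightarrow> real \<Rightarrow> ('a \<Rightarrow> complex) \<Rightarrow> ennreal" where
  "Lp_norm S p u =
     (if Lp_integral S p u = top then top else ennreal (enn2real (Lp_integral S p u) powr (1 / p)))"

definition Lp_space :: "'a::euclidean_space set \<Rightarrow> real \<Rightarrow> ('a \<Rightarrow> complex) set" where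
  "Lp_space S p = {u. u \<in> borel_measurable (lebesgue_on S) \<and> Lp_norm S p u < top}"

definition Lp_loc_space :: "'a::euclidean_space set \<Rightarrow> real \<Rightarrow> ('a \<Rightarrow> complex) set" where
  "Lp_loc_space S p = {u. u \<in> borel_measurable (lebesgue_on S) \<and>
      (\<forall>K. compact K \<and> K \<subseteq> S \<longrightarrow> Lp_integral K p u < top)}"

definition Ffun :: "'a::euclidean_space set \<Rightarrow> (real \<Rightarrow> 'a \<Rightarrow> 'a \<Rightarrow> real) \<Rightarrow> ('a \<Rightarrow> real)
    \<Rightarrow> ('a \<Rightarrow> complex) \<Rightarrow> ennreal" where
  "Ffun S \<phi> a u = (\<integral>\<^sup>+ z \<in> S \<times> S.
      ennreal (\<phi> (cmod (u (fst z) - u (snd z))) (fst z) (snd z) * a (fst z - snd z)) \<partial>lebesgue)"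

definition seminorm_p :: "'a::euclidean_space set \<Rightarrow> (real \<Rightarrow> 'a \<Rightarrow> 'a \<Rightarrow> real) \<Rightarrow> ('a \<Rightarrow> real)
    \<Rightarrow> ('a \<Rightarrow> complex) \<Rightarrow> ennreal" where
  "seminorm_p S \<phi> a u =
     Inf (ennreal ` {lam::real. lam > 0 \<and> Ffun S \<phi> a (\<lambda>x. u x / complex_of_real lam) \<le> 1})"

definition fnorm :: "'a::euclidean_space set \<Rightarrow> (real \<Rightarrow> 'a \<Rightarrow> 'a \<Rightarrow> real) \<Rightarrow> ('a \<Rightarrow> real)
    \<Rightarrow> real \<Rightarrow> ('a \<Rightarrow> complex) \<Rightarrow> ennreal" where
  "fnorm S \<phi> a pm u = seminorm_p S \<phi> a u + Lp_norm S pm u"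

definition Lspace :: "'a::euclidean_space set \<Rightarrow> (real \<Rightarrow> 'a \<Rightarrow> 'a \<Rightarrow> real) \<Rightarrow> ('a \<Rightarrow> real)
    \<Rightarrow> real \<Rightarrow> ('a \<Rightarrow> complex) set" where
  "Lspace S \<phi> a pm = {u \<in> Lp_loc_space S pm. fnorm S \<phi> a pm u < top}"

definition cond_C1 :: "'a::euclidean_space set \<Rightarrow> (real \<Rightarrow> 'a \<Rightarrow> 'a \<Rightarrow> real) \<Rightarrow> bool" where
  "cond_C1 S \<phi> \<longleftrightarrow> (\<forall>u \<in> Lp_loc_space S 1.
     (\<lambda>z. \<phi> (cmod (u (fst z) - u (snd z))) (fst z) (snd z)) \<in> borel_measurable (lebesgue_on (S \<times> S)))"

definition cond_C2 :: "'a::euclidean_space set \<Rightarrow> (real \<Rightarrow> 'a \<Rightarrow> 'a \<Rightarrow> real) \<Rightarrow> bool" where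
  "cond_C2 S \<phi> \<longleftrightarrow> (\<forall>\<epsilon>>0. \<exists>\<delta>. 0 < \<delta> \<and> \<delta> < 1 \<and>
     (AE z in lebesgue_on (S \<times> S). \<forall>s t. s > 0 \<and> t > 0 \<and> \<bar>s - t\<bar> \<ge> \<epsilon> * max s t \<longrightarrow>
        \<phi> ((s + t) / 2) (fst z) (snd z) \<le> (1 - \<delta>) * ((\<phi> s (fst z) (snd z) + \<phi> t (fst z) (snd z)) / 2)))"

definition cond_C3 :: "'a::euclidean_space set \<Rightarrow> (real \<Rightarrow> 'a \<Rightarrow> 'a \<Rightarrow> real) \<Rightarrow> real \<Rightarrow> real \<Rightarrow> real \<Rightarrow> bool" where
  "cond_C3 S \<phi> pm pp \<beta> \<longleftrightarrow> 1 < pm \<and> pm \<le> pp \<and> \<beta> \<ge> 1 \<and>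
     (AE z in lebesgue_on (S \<times> S).
        (\<forall>s t. 0 < s \<and> s \<le> t \<longrightarrow>
           \<phi> s (fst z) (snd z) / s powr pm \<le> \<beta> * (\<phi> t (fst z) (snd z) / t powr pm)) \<and>
        (\<forall>s t. 0 < s \<and> s \<le> t \<longrightarrow>
           \<beta> * (\<phi> s (fst z) (snd z) / s powr pp) \<ge> \<phi> t (fst z) (snd z) / t powr pp))"

definition cond_C4 :: "'a::euclidean_space set \<Rightarrow> (real \<Rightarrow> 'a \<Rightarrow> 'a \<Rightarrow> real) \<Rightarrow> real \<Rightarrow> bool" where
  "cond_C4 S \<phi> c1 \<longleftrightarrow> c1 > 0 \<and>
     (AE z in lebesgue_on (S \<times> S). 1 / c1 \<le> \<phi> 1 (fst z) (snd z) \<and> \<phi> 1 (fst z) (snd z) \<le> c1 \<and>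
        \<phi> 0 (fst z) (snd z) = 0 \<and> (\<forall>t>0. \<phi> t (fst z) (snd z) > 0))"

end

theory Submission
  imports Defs
begin

text \<open>The seminorm \<open>|u|\<^sub>p\<close> is the Luxemburg functional of the modular
  \<open>u \<mapsto> \<integral>\<integral> \<phi>(|u x - u y|, x, y) a(x - y)\<close>, and the \<open>L\<^sub>p\<^sub>-\<close> norm is the Luxemburg
  functional of \<open>t \<mapsto> t\<^bsup>p\<^sub>-\<^esup>\<close>. For almost every \<open>(x, y)\<close>, (C2) makes \<open>t \<mapsto> \<phi>(t, x, y)\<close>
  midpoint convex and (C3), (C4) bound it by \<open>\<beta> c\<^sub>1 (t\<^bsup>p\<^sub>-\<^esup> + t\<^bsup>p\<^sub>+\<^esup>)\<close>, so by the
  Bernstein-Doetsch argument it is convex and continuous. Convexity gives the triangle inequality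
  of the Luxemburg functional, continuity its lower semicontinuity under a.e. convergence (Fatou).
  A Cauchy sequence has a subsequence converging a.e. by the Riesz-Fischer argument applied to the
  \<open>L\<^sub>p\<^sub>-\<close> part of \<open>f\<close>, and lower semicontinuity of both parts turns this into convergence in
  \<open>f\<close>. The growth bound together with Young's inequality for the convolution with \<open>a \<in> L\<^sub>1\<close>
  embeds \<open>L\<^sub>p\<^sub>+ \<inter> L\<^sub>p\<^sub>-\<close> into \<open>L(\<Omega>)\<close>; the embedding of \<open>L(\<Omega>)\<close> into \<open>L\<^sub>p\<^sub>-\<close> holds
  because \<open>f\<close> contains the \<open>L\<^sub>p\<^sub>-\<close> norm.\<close>

section \<open>Midpoint-convex functions of a real variable\<close>

lemma midpoint_convex_dyadic:
  fixes g :: "real \<Rightarrow> real"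
  assumes mid: "\<And>s t. s > 0 \<Longrightarrow> t > 0 \<Longrightarrow> g ((s + t) / 2) \<le> (g s + g t) / 2"
    and z: "z > 0" and w: "w > 0"
  shows "g ((1 - (1/2)^n) * z + (1/2)^n * w) \<le> (1 - (1/2)^n) * g z + (1/2)^n * g w"
proof (induction n)
  case (Suc n)
  define q where "q = (1/2::real)^n"
  have q: "0 < q" "q \<le> 1" unfolding q_def by (auto simp: power_le_one)
  define p where "p = (1 - q) * z + q * w"
  have p: "p > 0" unfolding p_def using q z w by (intro add_nonneg_pos) auto
  have "g ((1 - (1/2)^Suc n) * z + (1/2)^Suc n * w) = g ((z + p) / 2)"
    unfolding p_def q_def by (simp add: field_simps)
  also have "\<dots> \<le> (g z + g p) / 2" using mid[OF z p] .
  also have "\<dots> \<le> (g z + ((1 - q) * g z + q * g w)) / 2"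
    using Suc.IH unfolding p_def q_def by simp
  also have "\<dots> = (1 - (1/2)^Suc n) * g z + (1/2)^Suc n * g w"
    unfolding q_def by (simp add: field_simps)
  finally show ?case .
qed simp

lemma midpoint_convex_upper_estimate:
  fixes g :: "real \<Rightarrow> real"
  assumes mid: "\<And>s t. s > 0 \<Longrightarrow> t > 0 \<Longrightarrow> g ((s + t) / 2) \<le> (g s + g t) / 2"
    and z: "z > 0" and bound: "\<And>t. 0 < t \<Longrightarrow> t \<le> 2 * z \<Longrightarrow> g t \<le> M"
    and x: "\<bar>x - z\<bar> < (1/2)^n * (z / 2)"
  shows "g x \<le> g z + (1/2)^n * (M - g z)"
proof -
  define q where "q = (1/2::real)^n"
  have q: "0 < q" "q \<le> 1" unfolding q_def by (auto simp: power_le_one)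
  define w where "w = z + (x - z) / q"
  have "\<bar>(x - z) / q\<bar> < z / 2"
    using x q unfolding q_def[symmetric] by (simp add: field_simps abs_divide)
  then have w: "0 < w" "w \<le> 2 * z" unfolding w_def using z by (simp_all only: abs_less_iff) linarith+
  have "x = (1 - q) * z + q * w" unfolding w_def using q by (simp add: field_simps)
  then have "g x \<le> (1 - q) * g z + q * g w"
    using midpoint_convex_dyadic[OF mid z w(1), of n] unfolding q_def by simp
  also have "\<dots> \<le> (1 - q) * g z + q * M" using bound[OF w] q by simp
  finally show ?thesis unfolding q_def by (simp add: algebra_simps)
qed

lemma midpoint_convex_isCont:
  fixes g :: "real \<Rightarrow> real"
  assumes mid: "\<And>s t. s > 0 \<Longrightarrow> t > 0 \<Longrightarrow> g ((s + t) / 2) \<le> (g s + g t) / 2"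
    and z: "z > 0" and bound: "\<And>t. 0 < t \<Longrightarrow> t \<le> 2 * z \<Longrightarrow> g t \<le> M"
  shows "isCont g z"
  unfolding isCont_def LIM_eq
proof (intro allI impI)
  fix r :: real assume "r > 0"
  define C where "C = M - g z"
  have "C \<ge> 0" using bound[of z] z unfolding C_def by simp
  obtain n where n: "(1/2::real)^n < r / (C + 1)"
    using real_arch_pow_inv[of "r / (C + 1)" "1/2::real"] \<open>r > 0\<close> \<open>C \<ge> 0\<close> by auto
  define q where "q = (1/2::real)^n"
  have q: "0 < q" "q \<le> 1" unfolding q_def by (auto simp: power_le_one)
  have "q * (C + 1) < r" using n \<open>C \<ge> 0\<close> unfolding q_def by (simp add: field_simps)
  moreover have "q * C \<le> q * (C + 1)" using q by simp
  ultimately have qC: "q * C < r" by linarith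
  show "\<exists>s>0. \<forall>x. x \<noteq> z \<and> norm (x - z) < s \<longrightarrow> norm (g x - g z) < r"
  proof (intro exI[of _ "q * (z / 2)"] conjI allI impI)
    show "q * (z / 2) > 0" using q z by simp
    fix x assume "x \<noteq> z \<and> norm (x - z) < q * (z / 2)"
    then have x: "\<bar>x - z\<bar> < q * (z / 2)" and x': "\<bar>(2 * z - x) - z\<bar> < q * (z / 2)"
      by (simp_all add: abs_minus_commute)
    have "q * (z / 2) \<le> z / 2" using q z by (simp add: mult_left_le_one_le)
    then have "\<bar>x - z\<bar> < z / 2" using x by linarith
    then have "x > 0" "2 * z - x > 0" unfolding abs_less_iff by linarith+
    have up: "g x \<le> g z + q * C" and up': "g (2 * z - x) \<le> g z + q * C"
      using midpoint_convex_upper_estimate[OF mid z bound] x x' unfolding q_def C_def by auto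
    have "g z \<le> (g x + g (2 * z - x)) / 2"
      using mid[OF \<open>x > 0\<close> \<open>2 * z - x > 0\<close>] by simp
    then show "norm (g x - g z) < r" using up up' qC by simp
  qed
qed

text \<open>The maximum principle for continuous midpoint-convex functions: a strictly positive
  maximum would be attained at a leftmost point, whose midpoint inequality fails.\<close>
lemma continuous_midpoint_convex_le_0:
  fixes h :: "real \<Rightarrow> real"
  assumes cont: "continuous_on {x..y} h"
    and mid: "\<And>s t. s \<in> {x..y} \<Longrightarrow> t \<in> {x..y} \<Longrightarrow> h ((s + t) / 2) \<le> (h s + h t) / 2"
    and hx: "h x \<le> 0" and hy: "h y \<le> 0" and p: "p \<in> {x..y}"
  shows "h p \<le> 0"
proof (rule ccontr)
  assume "\<not> h p \<le> 0"
  obtain m where m: "m \<in> {x..y}" "\<forall>t\<in>{x..y}. h t \<le> h m"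
    using continuous_attains_sup[OF compact_Icc _ cont] p by auto
  define c where "c = h m"
  have c: "c > 0" using m p \<open>\<not> h p \<le> 0\<close> unfolding c_def by force
  define Z where "Z = {t \<in> {x..y}. h t = c}"
  have "closed Z" unfolding Z_def
    by (rule continuous_closed_preimage_constant[OF cont closed_atLeastAtMost])
  moreover have "Z \<noteq> {}" using m unfolding Z_def c_def by auto
  moreover have Zb: "bdd_below Z" unfolding Z_def by (auto intro!: bdd_belowI[of _ x])
  ultimately have zZ: "Inf Z \<in> Z" by (intro closed_contains_Inf)
  define z where "z = Inf Z"
  have "z \<in> {x..y}" "h z = c" using zZ unfolding Z_def z_def by auto
  moreover have "z \<noteq> x" "z \<noteq> y" using hx hy c \<open>h z = c\<close> by auto
  ultimately have "x < z" "z < y" by auto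
  define d where "d = min (z - x) (y - z)"
  have d: "d > 0" "z - d \<in> {x..y}" "z + d \<in> {x..y}"
    using \<open>x < z\<close> \<open>z < y\<close> unfolding d_def by auto
  have "z - d \<notin> Z" using cInf_lower[OF _ Zb, of "z - d"] d(1) unfolding z_def by force
  then have "h (z - d) < c" using m d unfolding Z_def c_def by force
  moreover have "h (z + d) \<le> c" using m d unfolding c_def by auto
  moreover have "h z \<le> (h (z - d) + h (z + d)) / 2" using mid[OF d(2) d(3)] by simp
  ultimately have "h z < c" by argo
  then show False using \<open>h z = c\<close> by simp
qed

lemma continuous_midpoint_convex_imp_convex_on:
  fixes g :: "real \<Rightarrow> real"
  assumes I: "convex I" and cont: "continuous_on I g"
    and mid: "\<And>s t. s \<in> I \<Longrightarrow> t \<in> I \<Longrightarrow> g ((s + t) / 2) \<le> (g s + g t) / 2"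
  shows "convex_on I g"
proof (rule convex_on_linorderI[OF _ I])
  fix t x y :: real assume t: "0 < t" "t < 1" and xy: "x \<in> I" "y \<in> I" "x < y"
  have sub: "{x..y} \<subseteq> I"
    using I xy by (metis closed_segment_eq_real_ivl1 convex_contains_segment less_imp_le)
  define k where "k = (g y - g x) / (y - x)"
  define h where "h s = g s - (g x + k * (s - x))" for s
  have "t * (y - x) \<le> y - x" "0 \<le> t * (y - x)" using t xy by (simp_all add: mult_left_le_one_le)
  then have "(1 - t) * x + t * y \<in> {x..y}" by (simp add: algebra_simps)
  moreover have "h ((s + t) / 2) \<le> (h s + h t) / 2" if "s \<in> {x..y}" "t \<in> {x..y}" for s t
  proof -
    have "g ((s + t) / 2) \<le> (g s + g t) / 2" using that sub by (intro mid) auto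
    moreover have "k * ((s + t) / 2 - x) = (k * (s - x) + k * (t - x)) / 2"
      by (simp add: algebra_simps)
    ultimately show ?thesis unfolding h_def by (simp add: field_simps)
  qed
  moreover have "continuous_on {x..y} h"
    unfolding h_def using continuous_on_subset[OF cont sub] by (intro continuous_intros)
  moreover have "h x = 0" "h y = 0" unfolding h_def k_def using xy by simp_all
  ultimately have "h ((1 - t) * x + t * y) \<le> 0"
    using continuous_midpoint_convex_le_0[of x y h] by simp
  moreover have "k * ((1 - t) * x + t * y - x) = t * (k * (y - x))" by (simp add: algebra_simps)
  moreover have "k * (y - x) = g y - g x" unfolding k_def using xy by simp
  moreover have "(1 - t) * g x + t * g y = g x + t * (g y - g x)" by (simp add: algebra_simps)
  ultimately show "g ((1 - t) *\<^sub>R x + t *\<^sub>R y) \<le> (1 - t) * g x + t * g y"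
    unfolding h_def by simp
qed

lemma midpoint_convex_imp_convex_on_nonneg:
  fixes g :: "real \<Rightarrow> real"
  assumes mid: "\<And>s t. s > 0 \<Longrightarrow> t > 0 \<Longrightarrow> g ((s + t) / 2) \<le> (g s + g t) / 2"
    and g0: "g 0 = 0" and lim0: "(g \<longlongrightarrow> 0) (at_right 0)"
    and bounded: "\<And>T. \<exists>M. \<forall>t\<in>{0<..T}. g t \<le> M"
  shows "continuous_on {0..} g" and "convex_on {0..} g"
proof -
  have cont_pos: "isCont g z" if "z > 0" for z
  proof -
    obtain M where "\<forall>t\<in>{0<..2 * z}. g t \<le> M" using bounded by blast
    then show ?thesis using midpoint_convex_isCont[OF mid \<open>z > 0\<close>, of M] by auto
  qed
  show cont: "continuous_on {0..} g"
    unfolding continuous_on_eq_continuous_within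
  proof
    fix x :: real assume "x \<in> {0..}"
    then consider "x = 0" | "x > 0" by force
    then show "continuous (at x within {0..}) g"
    proof cases
      case 1
      have "at 0 within {0..} = at_right (0::real)"
        by (auto simp: filter_eq_iff eventually_at_filter le_less)
      then show ?thesis unfolding continuous_within using lim0 g0 1 by simp
    qed (use cont_pos continuous_at_imp_continuous_at_within in blast)
  qed
  have half: "g (t / 2) \<le> g t / 2" if "t > 0" for t
  proof (rule tendsto_le[of "at_right 0" "\<lambda>s. (g s + g t) / 2" _ "\<lambda>s. g ((s + t) / 2)"])
    show "((\<lambda>s. (g s + g t) / 2) \<longlongrightarrow> g t / 2) (at_right 0)"
      using lim0 by (auto intro!: tendsto_eq_intros)
    have "((\<lambda>s. (s + t) / 2) \<longlongrightarrow> (0 + t) / 2) (at_right 0)"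
      by (intro tendsto_intros) simp
    then show "((\<lambda>s. g ((s + t) / 2)) \<longlongrightarrow> g (t / 2)) (at_right 0)"
      using isCont_tendsto_compose[of "t / 2" g] cont_pos \<open>t > 0\<close> by fastforce
    show "\<forall>\<^sub>F s in at_right 0. g ((s + t) / 2) \<le> (g s + g t) / 2"
      using eventually_at_right_less[of 0] mid[OF _ that] by (auto elim!: eventually_mono)
  qed simp
  show "convex_on {0..} g"
  proof (rule continuous_midpoint_convex_imp_convex_on[OF convex_real_interval(1) cont])
    fix s t :: real assume "s \<in> {0..}" "t \<in> {0..}"
    then consider "s = 0" "t = 0" | "s = 0" "t > 0" | "s > 0" "t = 0" | "s > 0" "t > 0"
      by force
    then show "g ((s + t) / 2) \<le> (g s + g t) / 2"
      by cases (use g0 half mid in auto)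
  qed
qed

lemma convex_on_nonneg_mono:
  fixes g :: "real \<Rightarrow> real"
  assumes "convex_on {0..} g" "g 0 = 0" "\<And>t. t \<ge> 0 \<Longrightarrow> g t \<ge> 0" "0 \<le> s" "s \<le> t"
  shows "g s \<le> g t"
proof (cases "t = 0")
  case False
  then have t: "t > 0" using assms by simp
  have "g ((1 - s / t) *\<^sub>R 0 + (s / t) *\<^sub>R t) \<le> (1 - s / t) * g 0 + (s / t) * g t"
    by (rule convex_onD[OF assms(1)]) (use assms t in auto)
  then have "g s \<le> (s / t) * g t" using assms(2) t by simp
  also have "\<dots> \<le> g t" using assms t by (intro mult_left_le_one_le) auto
  finally show ?thesis .
qed (use assms in simp)

lemma convex_on_quotient_sum:
  fixes g :: "real \<Rightarrow> real"
  assumes "convex_on {0..} g" "l1 > 0" "l2 > 0" "s1 \<ge> 0" "s2 \<ge> 0"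
  shows "g ((s1 + s2) / (l1 + l2)) \<le> l1 / (l1 + l2) * g (s1 / l1) + l2 / (l1 + l2) * g (s2 / l2)"
proof -
  define \<theta> where "\<theta> = l2 / (l1 + l2)"
  have \<theta>: "0 \<le> \<theta>" "\<theta> \<le> 1" "1 - \<theta> = l1 / (l1 + l2)"
    unfolding \<theta>_def using assms by (simp_all add: field_simps)
  have "g ((1 - \<theta>) *\<^sub>R (s1 / l1) + \<theta> *\<^sub>R (s2 / l2)) \<le> (1 - \<theta>) * g (s1 / l1) + \<theta> * g (s2 / l2)"
    by (rule convex_onD[OF assms(1) \<theta>(1,2)]) (use assms in auto)
  moreover have "(1 - \<theta>) *\<^sub>R (s1 / l1) + \<theta> *\<^sub>R (s2 / l2) = (s1 + s2) / (l1 + l2)"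
    unfolding \<theta>(3) unfolding \<theta>_def using assms by (simp add: add_divide_distrib)
  ultimately show ?thesis unfolding \<theta>(3) unfolding \<theta>_def by simp
qed

lemma growth_bound_if_almost_monotone:
  fixes g :: "real \<Rightarrow> real"
  assumes inc: "\<forall>s t. 0 < s \<and> s \<le> t \<longrightarrow> g s / s powr pm \<le> \<beta> * (g t / t powr pm)"
    and dec: "\<forall>s t. 0 < s \<and> s \<le> t \<longrightarrow> \<beta> * (g s / s powr pp) \<ge> g t / t powr pp"
    and g1: "g 1 \<le> c" and \<beta>: "\<beta> \<ge> 0" and c: "c \<ge> 0" and t: "t > 0"
  shows "g t \<le> \<beta> * c * (t powr pm + t powr pp)"
proof (cases "t \<le> 1")
  case True
  then have "g t / t powr pm \<le> \<beta> * g 1" using inc[rule_format, of t 1] t by simp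
  then have "g t \<le> \<beta> * g 1 * t powr pm" using t by (simp add: divide_le_eq mult.commute)
  also have "\<dots> \<le> \<beta> * c * t powr pm" using g1 \<beta> by (intro mult_right_mono mult_left_mono) auto
  also have "\<dots> \<le> \<beta> * c * (t powr pm + t powr pp)" using \<beta> c by (intro mult_left_mono) auto
  finally show ?thesis .
next
  case False
  then have "g t / t powr pp \<le> \<beta> * g 1" using dec[rule_format, of 1 t] by simp
  then have "g t \<le> \<beta> * g 1 * t powr pp" using t by (simp add: divide_le_eq mult.commute)
  also have "\<dots> \<le> \<beta> * c * t powr pp" using g1 \<beta> by (intro mult_right_mono mult_left_mono) auto
  also have "\<dots> \<le> \<beta> * c * (t powr pm + t powr pp)" using \<beta> c by (intro mult_left_mono) auto
  finally show ?thesis .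
qed

section \<open>Luxemburg functionals\<close>

definition orlicz_integrand :: "'z measure \<Rightarrow> (real \<Rightarrow> 'z \<Rightarrow> real) \<Rightarrow> bool" where
  "orlicz_integrand M \<psi> \<longleftrightarrow> (AE z in M. \<psi> 0 z = 0 \<and> (\<forall>t\<ge>0. 0 \<le> \<psi> t z)
      \<and> convex_on {0..} (\<lambda>t. \<psi> t z) \<and> continuous_on {0..} (\<lambda>t. \<psi> t z))"

definition modular :: "'z measure \<Rightarrow> (real \<Rightarrow> 'z \<Rightarrow> real) \<Rightarrow> ('z \<Rightarrow> real) \<Rightarrow> ennreal" where
  "modular M \<psi> D = (\<integral>\<^sup>+ z. ennreal (\<psi> (D z) z) \<partial>M)"

definition luxemburg :: "'z measure \<Rightarrow> (real \<Rightarrow> 'z \<Rightarrow> real) \<Rightarrow> ('z \<Rightarrow> real) \<Rightarrow> ennreal" where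
  "luxemburg M \<psi> D = Inf (ennreal ` {l. l > 0 \<and> modular M \<psi> (\<lambda>z. D z / l) \<le> 1})"

lemma orlicz_integrand_mono:
  assumes "orlicz_integrand M \<psi>"
  shows "AE z in M. \<forall>s t. 0 \<le> s \<and> s \<le> t \<longrightarrow> \<psi> s z \<le> \<psi> t z"
  using assms unfolding orlicz_integrand_def
proof (rule eventually_mono, intro allI impI)
  fix z and s t :: real
  assume "\<psi> 0 z = 0 \<and> (\<forall>t\<ge>0. 0 \<le> \<psi> t z) \<and> convex_on {0..} (\<lambda>t. \<psi> t z)
    \<and> continuous_on {0..} (\<lambda>t. \<psi> t z)" and "0 \<le> s \<and> s \<le> t"
  then show "\<psi> s z \<le> \<psi> t z" by (intro convex_on_nonneg_mono[where g = "\<lambda>t. \<psi> t z"]) auto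
qed

lemma modular_mono_AE:
  assumes "orlicz_integrand M \<psi>" "AE z in M. 0 \<le> D z \<and> D z \<le> D' z"
  shows "modular M \<psi> D \<le> modular M \<psi> D'"
  unfolding modular_def
proof (rule nn_integral_mono_AE)
  show "AE z in M. ennreal (\<psi> (D z) z) \<le> ennreal (\<psi> (D' z) z)"
    using orlicz_integrand_mono[OF assms(1)] assms(2) by eventually_elim (auto intro: ennreal_leI)
qed

lemma luxemburg_le:
  assumes "l > 0" "modular M \<psi> (\<lambda>z. D z / l) \<le> 1"
  shows "luxemburg M \<psi> D \<le> ennreal l"
  unfolding luxemburg_def using assms by (intro Inf_lower) auto

lemma luxemburg_le_epsilon:
  assumes "r \<ge> 0" "\<And>e. e > 0 \<Longrightarrow> modular M \<psi> (\<lambda>z. D z / (r + e)) \<le> 1"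
  shows "luxemburg M \<psi> D \<le> ennreal r"
proof (rule ennreal_le_epsilon)
  fix e :: real assume "e > 0"
  then have "luxemburg M \<psi> D \<le> ennreal (r + e)" using assms by (intro luxemburg_le) auto
  then show "luxemburg M \<psi> D \<le> ennreal r + ennreal e" using assms \<open>e > 0\<close> by (simp add: ennreal_plus)
qed

lemma modular_le_1_if_luxemburg_less:
  assumes \<psi>: "orlicz_integrand M \<psi>" and D: "\<And>z. D z \<ge> 0" and less: "luxemburg M \<psi> D < ennreal e"
  shows "modular M \<psi> (\<lambda>z. D z / e) \<le> 1"
proof -
  obtain l where l: "l > 0" "modular M \<psi> (\<lambda>z. D z / l) \<le> 1" "ennreal l < ennreal e"
    using less unfolding luxemburg_def Inf_less_iff by auto
  then have "l < e" using ennreal_less_iff[of l e] by simp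
  then have "modular M \<psi> (\<lambda>z. D z / e) \<le> modular M \<psi> (\<lambda>z. D z / l)"
    using D l by (intro modular_mono_AE[OF \<psi>] AE_I2) (auto intro: divide_left_mono)
  then show ?thesis using l by simp
qed

lemma luxemburg_cong_AE:
  assumes "AE z in M. D z = D' z"
  shows "luxemburg M \<psi> D = luxemburg M \<psi> D'"
proof -
  have "modular M \<psi> (\<lambda>z. D z / l) = modular M \<psi> (\<lambda>z. D' z / l)" for l
    unfolding modular_def using assms by (intro nn_integral_cong_AE) (auto elim!: eventually_mono)
  then show ?thesis unfolding luxemburg_def by simp
qed

lemma luxemburg_eq_0:
  assumes \<psi>: "orlicz_integrand M \<psi>" and "AE z in M. D z = 0"
  shows "luxemburg M \<psi> D = 0"
proof -
  have "luxemburg M \<psi> D \<le> ennreal 0"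
  proof (rule luxemburg_le_epsilon)
    fix e :: real
    have "AE z in M. ennreal (\<psi> (D z / (0 + e)) z) = 0"
      using assms(2) \<psi>[unfolded orlicz_integrand_def] by eventually_elim auto
    then have "modular M \<psi> (\<lambda>z. D z / (0 + e)) = (\<integral>\<^sup>+ z. 0 \<partial>M)"
      unfolding modular_def by (rule nn_integral_cong_AE)
    then show "modular M \<psi> (\<lambda>z. D z / (0 + e)) \<le> 1" by simp
  qed simp
  then show ?thesis by simp
qed

lemma luxemburg_cmult_le:
  assumes \<psi>: "orlicz_integrand M \<psi>" and D: "\<And>z. D z \<ge> 0" and c: "c > 0"
  shows "luxemburg M \<psi> (\<lambda>z. c * D z) \<le> ennreal c * luxemburg M \<psi> D"
proof (cases "luxemburg M \<psi> D")
  case (real r)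
  have "luxemburg M \<psi> (\<lambda>z. c * D z) \<le> ennreal (c * r)"
  proof (rule luxemburg_le_epsilon)
    show "0 \<le> c * r" using c real by simp
    fix e :: real assume "e > 0"
    have "luxemburg M \<psi> D < ennreal (r + e / c)" using real \<open>e > 0\<close> c by (simp add: ennreal_less_iff)
    then have "modular M \<psi> (\<lambda>z. D z / (r + e / c)) \<le> 1"
      by (rule modular_le_1_if_luxemburg_less[OF \<psi> D])
    moreover have "(\<lambda>z. c * D z / (c * r + e)) = (\<lambda>z. D z / (r + e / c))"
      using c by (auto simp: field_simps)
    ultimately show "modular M \<psi> (\<lambda>z. c * D z / (c * r + e)) \<le> 1" by simp
  qed
  then show ?thesis using real c by (simp add: ennreal_mult)
qed (use c in \<open>simp add: ennreal_mult_top\<close>)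

lemma luxemburg_cmult:
  assumes \<psi>: "orlicz_integrand M \<psi>" and D: "\<And>z. D z \<ge> 0" and c: "c > 0"
  shows "luxemburg M \<psi> (\<lambda>z. c * D z) = ennreal c * luxemburg M \<psi> D"
proof (rule antisym)
  show "luxemburg M \<psi> (\<lambda>z. c * D z) \<le> ennreal c * luxemburg M \<psi> D"
    by (rule luxemburg_cmult_le[OF assms])
  have "luxemburg M \<psi> (\<lambda>z. (1 / c) * (c * D z)) \<le> ennreal (1 / c) * luxemburg M \<psi> (\<lambda>z. c * D z)"
    using D c by (intro luxemburg_cmult_le[OF \<psi>]) auto
  then have "ennreal c * luxemburg M \<psi> D \<le> ennreal c * (ennreal (1 / c) * luxemburg M \<psi> (\<lambda>z. c * D z))"
    using c by (intro mult_left_mono) auto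
  also have "\<dots> = luxemburg M \<psi> (\<lambda>z. c * D z)"
    using c by (simp add: mult.assoc[symmetric] ennreal_mult[symmetric])
  finally show "ennreal c * luxemburg M \<psi> D \<le> luxemburg M \<psi> (\<lambda>z. c * D z)" .
qed

lemma modular_quotient_sum_le:
  assumes \<psi>: "orlicz_integrand M \<psi>" and D1: "\<And>z. D1 z \<ge> 0" and D2: "\<And>z. D2 z \<ge> 0"
    and D: "AE z in M. 0 \<le> D z \<and> D z \<le> D1 z + D2 z" and l: "l1 > 0" "l2 > 0"
    and meas: "(\<lambda>z. \<psi> (D1 z / l1) z) \<in> borel_measurable M" "(\<lambda>z. \<psi> (D2 z / l2) z) \<in> borel_measurable M"
  shows "modular M \<psi> (\<lambda>z. D z / (l1 + l2)) \<le> ennreal (l1 / (l1 + l2)) * modular M \<psi> (\<lambda>z. D1 z / l1)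
    + ennreal (l2 / (l1 + l2)) * modular M \<psi> (\<lambda>z. D2 z / l2)"
proof -
  define w1 where "w1 = l1 / (l1 + l2)"
  define w2 where "w2 = l2 / (l1 + l2)"
  have "AE z in M. ennreal (\<psi> (D z / (l1 + l2)) z) \<le>
      ennreal w1 * ennreal (\<psi> (D1 z / l1) z) + ennreal w2 * ennreal (\<psi> (D2 z / l2) z)"
    using D \<psi>[unfolded orlicz_integrand_def] orlicz_integrand_mono[OF \<psi>]
  proof eventually_elim
    case (elim z)
    have "D z / (l1 + l2) \<le> (D1 z + D2 z) / (l1 + l2)" using elim l by (intro divide_right_mono) auto
    moreover have "0 \<le> D z / (l1 + l2)" using elim l by simp
    ultimately have "\<psi> (D z / (l1 + l2)) z \<le> \<psi> ((D1 z + D2 z) / (l1 + l2)) z" using elim by blast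
    also have "\<dots> \<le> w1 * \<psi> (D1 z / l1) z + w2 * \<psi> (D2 z / l2) z"
      unfolding w1_def w2_def using elim l D1 D2
      by (intro convex_on_quotient_sum[where g = "\<lambda>t. \<psi> t z"]) auto
    finally show ?case
      using elim l D1 D2 unfolding w1_def w2_def
      by (simp add: ennreal_leI ennreal_plus[symmetric] ennreal_mult[symmetric] del: ennreal_plus)
  qed
  then have "modular M \<psi> (\<lambda>z. D z / (l1 + l2)) \<le>
      (\<integral>\<^sup>+z. ennreal w1 * ennreal (\<psi> (D1 z / l1) z) + ennreal w2 * ennreal (\<psi> (D2 z / l2) z) \<partial>M)"
    unfolding modular_def by (rule nn_integral_mono_AE)
  also have "\<dots> = ennreal w1 * modular M \<psi> (\<lambda>z. D1 z / l1) + ennreal w2 * modular M \<psi> (\<lambda>z. D2 z / l2)"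
    unfolding modular_def using meas by (simp add: nn_integral_add nn_integral_cmult)
  finally show ?thesis unfolding w1_def w2_def .
qed

lemma luxemburg_triangle:
  assumes \<psi>: "orlicz_integrand M \<psi>" and D1: "\<And>z. D1 z \<ge> 0" and D2: "\<And>z. D2 z \<ge> 0"
    and D: "AE z in M. 0 \<le> D z \<and> D z \<le> D1 z + D2 z"
    and meas1: "\<And>l. l > 0 \<Longrightarrow> (\<lambda>z. \<psi> (D1 z / l) z) \<in> borel_measurable M"
    and meas2: "\<And>l. l > 0 \<Longrightarrow> (\<lambda>z. \<psi> (D2 z / l) z) \<in> borel_measurable M"
  shows "luxemburg M \<psi> D \<le> luxemburg M \<psi> D1 + luxemburg M \<psi> D2"
proof (cases "luxemburg M \<psi> D1 = top \<or> luxemburg M \<psi> D2 = top")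
  case False
  then obtain r1 r2 where r: "luxemburg M \<psi> D1 = ennreal r1" "r1 \<ge> 0"
    "luxemburg M \<psi> D2 = ennreal r2" "r2 \<ge> 0"
    by (metis ennreal_cases)
  have "luxemburg M \<psi> D \<le> ennreal (r1 + r2)"
  proof (rule luxemburg_le_epsilon)
    show "0 \<le> r1 + r2" using r by simp
    fix e :: real assume e: "e > 0"
    define l1 where "l1 = r1 + e / 2"
    define l2 where "l2 = r2 + e / 2"
    have l: "l1 > 0" "l2 > 0" "r1 + r2 + e = l1 + l2" unfolding l1_def l2_def using r e by auto
    have "modular M \<psi> (\<lambda>z. D1 z / l1) \<le> 1"
      using r e by (intro modular_le_1_if_luxemburg_less[OF \<psi> D1]) (simp add: ennreal_less_iff l1_def)
    moreover have "modular M \<psi> (\<lambda>z. D2 z / l2) \<le> 1"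
      using r e by (intro modular_le_1_if_luxemburg_less[OF \<psi> D2]) (simp add: ennreal_less_iff l2_def)
    ultimately have "modular M \<psi> (\<lambda>z. D z / (l1 + l2)) \<le> ennreal (l1 / (l1 + l2)) * 1 + ennreal (l2 / (l1 + l2)) * 1"
      using modular_quotient_sum_le[OF \<psi> D1 D2 D l(1,2) meas1[OF l(1)] meas2[OF l(2)]]
      by (meson add_mono mult_left_mono order_trans zero_le)
    also have "\<dots> = 1"
      using l by (simp add: ennreal_plus[symmetric] add_divide_distrib[symmetric] del: ennreal_plus)
    finally show "modular M \<psi> (\<lambda>z. D z / (r1 + r2 + e)) \<le> 1" unfolding l(3) .
  qed
  then show ?thesis using r by (simp add: ennreal_plus)
qed auto

lemma luxemburg_Fatou:
  assumes \<psi>: "orlicz_integrand M \<psi>" and e: "e > 0"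
    and D: "\<And>k z. D k z \<ge> 0" and D_lim: "\<And>z. D_lim z \<ge> 0"
    and lim: "AE z in M. (\<lambda>k. D k z) \<longlonglongrightarrow> D_lim z"
    and meas: "\<And>k. (\<lambda>z. \<psi> (D k z / e) z) \<in> borel_measurable M"
    and less: "\<forall>\<^sub>F k in sequentially. luxemburg M \<psi> (D k) < ennreal e"
  shows "luxemburg M \<psi> D_lim \<le> ennreal e"
proof (rule luxemburg_le[OF e])
  have "AE z in M. ennreal (\<psi> (D_lim z / e) z) = liminf (\<lambda>k. ennreal (\<psi> (D k z / e) z))"
    using lim \<psi> unfolding orlicz_integrand_def
  proof eventually_elim
    case (elim z)
    have "(\<lambda>k. D k z / e) \<longlonglongrightarrow> D_lim z / e" using elim e by (intro tendsto_intros) auto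
    then have "(\<lambda>k. \<psi> (D k z / e) z) \<longlonglongrightarrow> \<psi> (D_lim z / e) z"
      using elim D D_lim e by (intro continuous_on_tendsto_compose[of "{0..}" "\<lambda>t. \<psi> t z"]) auto
    then have "(\<lambda>k. ennreal (\<psi> (D k z / e) z)) \<longlonglongrightarrow> ennreal (\<psi> (D_lim z / e) z)"
      by (rule tendsto_ennrealI)
    then show ?case by (simp add: lim_imp_Liminf)
  qed
  then have "modular M \<psi> (\<lambda>z. D_lim z / e) = (\<integral>\<^sup>+z. liminf (\<lambda>k. ennreal (\<psi> (D k z / e) z)) \<partial>M)"
    unfolding modular_def by (rule nn_integral_cong_AE)
  also have "\<dots> \<le> liminf (\<lambda>k. modular M \<psi> (\<lambda>z. D k z / e))"
    unfolding modular_def using meas by (intro nn_integral_liminf) simp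
  also have "\<dots> \<le> 1"
    using less modular_le_1_if_luxemburg_less[OF \<psi> D] by (intro Liminf_le) (auto elim: eventually_mono)
  finally show "modular M \<psi> (\<lambda>z. D_lim z / e) \<le> 1" .
qed

lemma ennreal_LIMSEQ_0_if_eventually_le:
  fixes f :: "nat \<Rightarrow> ennreal"
  assumes le: "\<And>e. e > 0 \<Longrightarrow> \<forall>\<^sub>F n in sequentially. f n \<le> ennreal e"
  shows "f \<longlonglongrightarrow> 0"
proof (rule order_tendstoI)
  fix y :: ennreal assume "0 < y"
  obtain e where "e > 0" "ennreal e < y"
  proof (cases y)
    case (real r)
    then show ?thesis using \<open>0 < y\<close> that[of "r / 2"] by (simp add: ennreal_lessI)
  qed (use that[of 1] in simp)
  then show "\<forall>\<^sub>F n in sequentially. f n < y"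
    using le[of e] by (auto elim: eventually_mono intro: le_less_trans)
qed simp

section \<open>Lebesgue spaces\<close>

lemma orlicz_integrand_powr:
  assumes p: "p \<ge> 1"
  shows "orlicz_integrand M (\<lambda>t z. t powr p)"
proof -
  have mid: "((s + t) / 2) powr p \<le> (s powr p + t powr p) / 2" if "s > 0" "t > 0" for s t
    using convex_onD[OF powr_convex[OF p], of "1/2" s t] that by (simp add: add_divide_distrib)
  have lim0: "((\<lambda>t. t powr p) \<longlongrightarrow> 0) (at_right 0)"
    using p by (intro tendsto_zero_powrI) (auto simp: eventually_at_right_less eventually_at_filter)
  have bounded: "\<exists>M. \<forall>t\<in>{0<..T}. t powr p \<le> M" for T
    using p by (intro exI[of _ "T powr p"]) (auto intro: powr_mono2)
  have "continuous_on {0..} (\<lambda>t. t powr p)" "convex_on {0..} (\<lambda>t. t powr p)"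
    using midpoint_convex_imp_convex_on_nonneg[OF mid _ lim0 bounded] by auto
  then show ?thesis unfolding orlicz_integrand_def by simp
qed

lemma Lp_integral_eq_nn_integral_on:
  assumes "S \<in> sets lebesgue"
  shows "Lp_integral S p u = (\<integral>\<^sup>+ z. ennreal (cmod (u z) powr p) \<partial>lebesgue_on S)"
  unfolding Lp_integral_def using assms by (simp add: nn_integral_restrict_space)

lemma Lp_norm_less_top_iff: "Lp_norm S p u < top \<longleftrightarrow> Lp_integral S p u < top"
  unfolding Lp_norm_def by (auto simp: top.not_eq_extremum)

lemma Lp_integral_eq_powr_if_Lp_norm_eq:
  assumes "Lp_norm S p u = ennreal N" "N \<ge> 0" "p > 0"
  shows "Lp_integral S p u = ennreal (N powr p)"
proof -
  have "Lp_integral S p u \<noteq> top" using assms unfolding Lp_norm_def by (auto split: if_splits)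
  then obtain i where i: "Lp_integral S p u = ennreal i" "i \<ge> 0" by (cases "Lp_integral S p u") auto
  then have "i powr (1 / p) = N" using assms unfolding Lp_norm_def by simp
  then have "N powr p = i" using i assms(3) by (auto simp: powr_powr)
  then show ?thesis using i by simp
qed

lemma Lp_norm_eq_luxemburg:
  assumes S: "S \<in> sets lebesgue" and p: "p > 0"
    and u: "u \<in> borel_measurable (lebesgue_on S)"
  shows "Lp_norm S p u = luxemburg (lebesgue_on S) (\<lambda>t z. t powr p) (\<lambda>z. cmod (u z))"
proof -
  define I where "I = Lp_integral S p u"
  have modular: "modular (lebesgue_on S) (\<lambda>t z. t powr p) (\<lambda>z. cmod (u z) / l) = ennreal (1 / l powr p) * I"
    if "l > 0" for l
  proof -
    have "modular (lebesgue_on S) (\<lambda>t z. t powr p) (\<lambda>z. cmod (u z) / l) =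
        (\<integral>\<^sup>+ z. ennreal (1 / l powr p) * ennreal (cmod (u z) powr p) \<partial>lebesgue_on S)"
      unfolding modular_def using that
      by (intro nn_integral_cong) (simp add: powr_divide ennreal_mult[symmetric])
    also have "\<dots> = ennreal (1 / l powr p) * I"
      unfolding I_def Lp_integral_eq_nn_integral_on[OF S] using u by (intro nn_integral_cmult) measurable
    finally show ?thesis .
  qed
  show ?thesis
  proof (cases I)
    case (real i)
    define r where "r = i powr (1 / p)"
    have r: "r \<ge> 0" "r powr p = i" unfolding r_def using p real by (auto simp: powr_powr)
    have "modular (lebesgue_on S) (\<lambda>t z. t powr p) (\<lambda>z. cmod (u z) / l) \<le> 1 \<longleftrightarrow> r \<le> l"
      if l: "l > 0" for l
    proof -
      have "modular (lebesgue_on S) (\<lambda>t z. t powr p) (\<lambda>z. cmod (u z) / l) \<le> 1 \<longleftrightarrow> i / l powr p \<le> 1"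
        using l real by (simp add: modular ennreal_mult[symmetric] ennreal_le_1)
      also have "\<dots> \<longleftrightarrow> r powr p \<le> l powr p" using l r by (simp add: divide_le_eq_1)
      also have "\<dots> \<longleftrightarrow> r \<le> l" using p r l powr_mono2[of p r l] powr_less_mono2[of p l r] by force
      finally show ?thesis .
    qed
    then have "luxemburg (lebesgue_on S) (\<lambda>t z. t powr p) (\<lambda>z. cmod (u z)) = ennreal r"
      using r unfolding luxemburg_def
      by (intro antisym Inf_greatest luxemburg_le_epsilon[unfolded luxemburg_def]) auto
    moreover have "Lp_norm S p u = ennreal r" unfolding Lp_norm_def r_def using real I_def by simp
    ultimately show ?thesis by simp
  next
    case top
    then have "{l. l > 0 \<and> modular (lebesgue_on S) (\<lambda>t z. t powr p) (\<lambda>z. cmod (u z) / l) \<le> 1} = {}"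
      by (auto simp: modular ennreal_mult_top top_unique)
    then show ?thesis using top unfolding luxemburg_def Lp_norm_def I_def by simp
  qed
qed

lemma Lp_norm_triangle:
  assumes S: "S \<in> sets lebesgue" and p: "p \<ge> 1"
    and u: "u \<in> borel_measurable (lebesgue_on S)" and v: "v \<in> borel_measurable (lebesgue_on S)"
  shows "Lp_norm S p (\<lambda>x. u x + v x) \<le> Lp_norm S p u + Lp_norm S p v"
proof -
  have "p > 0" using p by simp
  have uv: "(\<lambda>x. u x + v x) \<in> borel_measurable (lebesgue_on S)" using u v by measurable
  show ?thesis
    unfolding Lp_norm_eq_luxemburg[OF S \<open>p > 0\<close> u] Lp_norm_eq_luxemburg[OF S \<open>p > 0\<close> v]
      Lp_norm_eq_luxemburg[OF S \<open>p > 0\<close> uv]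
    using u v by (intro luxemburg_triangle[OF orlicz_integrand_powr[OF p]] AE_I2)
      (auto intro: norm_triangle_ineq)
qed

lemma Lp_norm_cmult:
  assumes S: "S \<in> sets lebesgue" and p: "p > 0"
    and u: "u \<in> borel_measurable (lebesgue_on S)"
  shows "Lp_norm S p (\<lambda>x. c * u x) = ennreal (cmod c) * Lp_norm S p u"
proof -
  have "Lp_integral S p (\<lambda>x. c * u x) =
      (\<integral>\<^sup>+ z. ennreal (cmod c powr p) * ennreal (cmod (u z) powr p) \<partial>lebesgue_on S)"
    unfolding Lp_integral_eq_nn_integral_on[OF S] by (simp add: norm_mult powr_mult ennreal_mult)
  also have "\<dots> = ennreal (cmod c powr p) * Lp_integral S p u"
    unfolding Lp_integral_eq_nn_integral_on[OF S] using u by (intro nn_integral_cmult) measurable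
  finally have "Lp_integral S p (\<lambda>x. c * u x) = ennreal (cmod c powr p) * Lp_integral S p u" .
  then show ?thesis
    unfolding Lp_norm_def using p
    by (auto simp: ennreal_mult_eq_top_iff enn2real_mult powr_mult powr_powr ennreal_mult)
qed

lemma Lp_norm_cong_AE:
  assumes "S \<in> sets lebesgue" and "AE x in lebesgue_on S. u x = v x"
  shows "Lp_norm S p u = Lp_norm S p v"
proof -
  have "Lp_integral S p u = Lp_integral S p v"
    unfolding Lp_integral_eq_nn_integral_on[OF assms(1)]
    using assms(2) by (intro nn_integral_cong_AE) (auto elim: eventually_mono)
  then show ?thesis unfolding Lp_norm_def by simp
qed

lemma Lp_norm_eq_0_iff:
  assumes S: "S \<in> sets lebesgue" and p: "p > 0"
    and u: "u \<in> borel_measurable (lebesgue_on S)"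
  shows "Lp_norm S p u = 0 \<longleftrightarrow> (AE x in lebesgue_on S. u x = 0)"
proof -
  have "Lp_norm S p u = 0 \<longleftrightarrow> Lp_integral S p u = 0"
    unfolding Lp_norm_def using p by (cases "Lp_integral S p u") auto
  also have "\<dots> \<longleftrightarrow> (AE x in lebesgue_on S. ennreal (cmod (u x) powr p) = 0)"
    unfolding Lp_integral_eq_nn_integral_on[OF S] using u by (intro nn_integral_0_iff_AE) measurable
  also have "\<dots> \<longleftrightarrow> (AE x in lebesgue_on S. u x = 0)" by simp
  finally show ?thesis .
qed

lemma Lp_integral_divide_le:
  assumes S: "S \<in> sets lebesgue" and u: "u \<in> borel_measurable (lebesgue_on S)" and p: "p \<ge> 1"
    and N: "Lp_norm S p u = ennreal N" "0 \<le> N" "N \<le> l"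
  shows "Lp_integral S p (\<lambda>x. u x / complex_of_real l) \<le> ennreal (N / l)"
proof (cases "l = 0")
  case False
  then have "l > 0" using N by simp
  have "(\<lambda>x. u x / complex_of_real l) = (\<lambda>x. complex_of_real (1 / l) * u x)"
    by (simp add: field_simps)
  then have "Lp_norm S p (\<lambda>x. u x / complex_of_real l) = ennreal (N / l)"
    using Lp_norm_cmult[OF S _ u, of p "complex_of_real (1 / l)"] p N \<open>l > 0\<close>
    by (simp add: norm_divide ennreal_mult[symmetric])
  then have "Lp_integral S p (\<lambda>x. u x / complex_of_real l) = ennreal ((N / l) powr p)"
    using N \<open>l > 0\<close> p by (intro Lp_integral_eq_powr_if_Lp_norm_eq) auto
  also have "\<dots> \<le> ennreal ((N / l) powr 1)"
    using N \<open>l > 0\<close> p by (intro ennreal_leI powr_mono') auto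
  finally show ?thesis using N \<open>l > 0\<close> by simp
qed (simp add: Lp_integral_def)

lemma Lp_integral_mono_set:
  assumes "K \<subseteq> S"
  shows "Lp_integral K p u \<le> Lp_integral S p u"
  unfolding Lp_integral_def using assms
  by (intro nn_integral_mono) (auto split: split_indicator)

lemma Lp_space_subset_Lp_loc_space: "Lp_space S p \<subseteq> Lp_loc_space S p"
  unfolding Lp_space_def Lp_loc_space_def Lp_norm_less_top_iff
  using Lp_integral_mono_set[of _ S p] le_less_trans by blast

lemma Lp_space_subset_Lp_loc_space_1:
  assumes p: "p \<ge> 1"
  shows "Lp_space S p \<subseteq> Lp_loc_space S 1"
proof
  fix u assume u: "u \<in> Lp_space S p"
  have "Lp_integral K 1 u < top" if K: "compact K" "K \<subseteq> S" for K
  proof -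
    have "K \<in> sets lebesgue" using K by (simp add: compact_imp_closed borel_closed)
    have le: "ennreal (cmod (u x) powr 1) \<le> ennreal 1 + ennreal (cmod (u x) powr p)" for x
    proof -
      have "cmod (u x) powr 1 \<le> 1 + cmod (u x) powr p"
      proof (cases "cmod (u x) \<le> 1")
        case False
        then have "cmod (u x) powr 1 \<le> cmod (u x) powr p" using p by (intro powr_mono) auto
        then show ?thesis by linarith
      qed (simp add: add_increasing2)
      then show ?thesis by (rule order_trans[OF ennreal_leI]) (simp add: ennreal_plus)
    qed
    have "u \<in> borel_measurable (lebesgue_on K)"
      using u K measurable_restrict_mono unfolding Lp_space_def by blast
    have "Lp_integral K 1 u \<le> (\<integral>\<^sup>+ x. ennreal 1 + ennreal (cmod (u x) powr p) \<partial>lebesgue_on K)"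
      unfolding Lp_integral_eq_nn_integral_on[OF \<open>K \<in> sets lebesgue\<close>] by (intro nn_integral_mono le)
    also have "\<dots> = emeasure lebesgue K + Lp_integral K p u"
      using \<open>u \<in> borel_measurable (lebesgue_on K)\<close> \<open>K \<in> sets lebesgue\<close>
      by (subst nn_integral_add) (auto simp: Lp_integral_eq_nn_integral_on emeasure_restrict_space)
    also have "\<dots> < top"
    proof -
      have "emeasure lebesgue K < top"
        using K emeasure_compact_finite[of K] by (simp add: compact_imp_closed borel_closed)
      moreover have "Lp_integral K p u < top"
        using u K Lp_space_subset_Lp_loc_space unfolding Lp_loc_space_def by blast
      ultimately show ?thesis by simp
    qed
    finally show ?thesis .
  qed
  then show "u \<in> Lp_loc_space S 1" using u unfolding Lp_space_def Lp_loc_space_def by simp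
qed

lemma Lp_space_cmult:
  assumes "S \<in> sets lebesgue" "p > 0" "u \<in> Lp_space S p"
  shows "(\<lambda>x. c * u x) \<in> Lp_space S p"
  using assms Lp_norm_cmult[of S p u c] unfolding Lp_space_def
  by (auto simp: ennreal_mult_less_top)

lemma luxemburg_powr_sum_le:
  fixes d :: "nat \<Rightarrow> 'a::euclidean_space \<Rightarrow> complex"
  assumes S: "S \<in> sets lebesgue" and p: "p \<ge> 1" and d: "\<And>k. d k \<in> borel_measurable (lebesgue_on S)"
  shows "luxemburg (lebesgue_on S) (\<lambda>t z. t powr p) (\<lambda>x. \<Sum>k<n. cmod (d k x)) \<le> (\<Sum>k<n. Lp_norm S p (d k))"
proof (induction n)
  case 0
  show ?case by (simp add: luxemburg_eq_0[OF orlicz_integrand_powr[OF p]])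
next
  case (Suc n)
  let ?L = "luxemburg (lebesgue_on S) (\<lambda>t z. t powr p)"
  have "?L (\<lambda>x. \<Sum>k<Suc n. cmod (d k x)) \<le> ?L (\<lambda>x. \<Sum>k<n. cmod (d k x)) + ?L (\<lambda>x. cmod (d n x))"
    using d by (intro luxemburg_triangle[OF orlicz_integrand_powr[OF p]] AE_I2) (auto simp: sum_nonneg)
  also have "?L (\<lambda>x. cmod (d n x)) = Lp_norm S p (d n)"
    using p by (intro Lp_norm_eq_luxemburg[OF S _ d, symmetric]) simp
  also have "?L (\<lambda>x. \<Sum>k<n. cmod (d k x)) + Lp_norm S p (d n) \<le> (\<Sum>k<n. Lp_norm S p (d k)) + Lp_norm S p (d n)"
    using Suc by (rule add_right_mono)
  finally show ?case by simp
qed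

lemma AE_bounded_if_nn_integral_powr_le_1:
  fixes G :: "nat \<Rightarrow> 'z \<Rightarrow> real"
  assumes meas: "\<And>n. G n \<in> borel_measurable M" and nonneg: "\<And>n x. 0 \<le> G n x"
    and mono: "\<And>n x. G n x \<le> G (Suc n) x" and p: "p > 0"
    and le: "\<And>n. (\<integral>\<^sup>+x. ennreal (G n x powr p) \<partial>M) \<le> 1"
  shows "AE x in M. \<exists>B. \<forall>n. G n x \<le> B"
proof -
  define f where "f n x = ennreal (G n x powr p)" for n x
  have f_meas: "f n \<in> borel_measurable M" for n unfolding f_def using meas by measurable
  have "incseq f"
    unfolding f_def using mono nonneg p by (intro incseq_SucI le_funI ennreal_leI powr_mono2) auto
  then have "(\<integral>\<^sup>+ x. (SUP n. f n x) \<partial>M) = (SUP n. integral\<^sup>N M (f n))"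
    by (rule nn_integral_monotone_convergence_SUP[OF _ f_meas])
  also have "\<dots> \<le> 1" using le unfolding f_def by (simp add: SUP_le_iff)
  finally have "(\<integral>\<^sup>+ x. (SUP n. f n x) \<partial>M) \<noteq> \<infinity>" by (auto simp: top_unique)
  then have "AE x in M. (SUP n. f n x) \<noteq> \<infinity>"
    by (intro nn_integral_PInf_AE) (use f_meas in measurable)
  then show ?thesis
  proof eventually_elim
    case (elim x)
    then obtain R where R: "(SUP n. f n x) = ennreal R" "R \<ge> 0" by (cases "SUP n. f n x") auto
    have "G n x \<le> R powr (1 / p)" for n
    proof -
      have "f n x \<le> ennreal R" using R by (metis SUP_upper UNIV_I)
      then have "G n x powr p \<le> R" unfolding f_def using R by (simp add: ennreal_le_iff)
      then have "(G n x powr p) powr (1 / p) \<le> R powr (1 / p)" using p by (intro powr_mono2) auto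
      then show ?thesis using p nonneg[of n x] by (simp add: powr_powr)
    qed
    then show ?case by blast
  qed
qed

lemma AE_summable_if_Lp_norms_summable:
  assumes S: "S \<in> sets lebesgue" and p: "p \<ge> 1"
    and d: "\<And>k. d k \<in> borel_measurable (lebesgue_on S)"
    and c: "\<And>k. c k \<ge> 0" "summable c" and bound: "\<And>k. Lp_norm S p (d k) \<le> ennreal (c k)"
  shows "AE x in lebesgue_on S. summable (\<lambda>k. cmod (d k x))"
proof -
  define C where "C = suminf c + 1"
  have C: "C > 0" unfolding C_def using suminf_nonneg[OF c(2)] c(1) by fastforce
  have lux_less: "luxemburg (lebesgue_on S) (\<lambda>t z. t powr p) (\<lambda>x. \<Sum>k<n. cmod (d k x)) < ennreal C" for n
  proof -
    have "(\<Sum>k<n. Lp_norm S p (d k)) \<le> (\<Sum>k<n. ennreal (c k))" by (rule sum_mono) (rule bound)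
    also have "\<dots> = ennreal (\<Sum>k<n. c k)" using c(1) by simp
    also have "(\<Sum>k<n. c k) < C"
      unfolding C_def using sum_le_suminf[OF c(2), of "{..<n}"] c(1) by fastforce
    then have "ennreal (\<Sum>k<n. c k) < ennreal C" using C by (intro ennreal_lessI)
    finally show ?thesis using luxemburg_powr_sum_le[OF S p d, where n = n] by (rule le_less_trans[rotated])
  qed
  have "modular (lebesgue_on S) (\<lambda>t z. t powr p) (\<lambda>x. (\<Sum>k<n. cmod (d k x)) / C) \<le> 1" for n
    by (rule modular_le_1_if_luxemburg_less[OF orlicz_integrand_powr[OF p] _ lux_less]) (simp add: sum_nonneg)
  then have "AE x in lebesgue_on S. \<exists>B. \<forall>n. (\<Sum>k<n. cmod (d k x)) / C \<le> B"
    using d C p unfolding modular_def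
    by (intro AE_bounded_if_nn_integral_powr_le_1[where p = p])
      (auto simp: sum_nonneg intro: divide_right_mono)
  then show ?thesis
  proof eventually_elim
    case (elim x)
    then obtain B where "(\<Sum>k<n. cmod (d k x)) / C \<le> B" for n by blast
    then have "(\<Sum>k\<le>n. cmod (d k x)) \<le> C * B" for n
      using C by (simp add: field_simps lessThan_Suc_atMost[symmetric] del: sum.lessThan_Suc)
    then show "summable (\<lambda>k. cmod (d k x))" by (intro bounded_imp_summable) auto
  qed
qed

lemma AE_convergent_if_Lp_fast_Cauchy:
  assumes S: "S \<in> sets lebesgue" and p: "p \<ge> 1"
    and V: "\<And>k. V k \<in> borel_measurable (lebesgue_on S)"
    and fast: "\<And>k. Lp_norm S p (\<lambda>x. V (Suc k) x - V k x) \<le> ennreal ((1/2)^k)"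
  shows "AE x in lebesgue_on S. convergent (\<lambda>k. V k x)"
proof -
  have d: "(\<lambda>x. V (Suc k) x - V k x) \<in> borel_measurable (lebesgue_on S)" for k
    using V by measurable
  have "summable (\<lambda>k. (1/2::real)^k)" by (rule summable_geometric) simp
  then have "AE x in lebesgue_on S. summable (\<lambda>k. cmod (V (Suc k) x - V k x))"
    by (rule AE_summable_if_Lp_norms_summable[OF S p d _ _ fast, rotated]) simp
  then show ?thesis
  proof eventually_elim
    case (elim x)
    then have "summable (\<lambda>k. V (Suc k) x - V k x)" by (rule summable_norm_cancel)
    then have "(\<lambda>n. \<Sum>k<n. V (Suc k) x - V k x) \<longlonglongrightarrow> (\<Sum>k. V (Suc k) x - V k x)"
      by (rule summable_LIMSEQ)
    moreover have "(\<Sum>k<n. V (Suc k) x - V k x) = V n x - V 0 x" for n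
      by (rule sum_lessThan_telescope)
    ultimately have "(\<lambda>n. V n x - V 0 x) \<longlonglongrightarrow> (\<Sum>k. V (Suc k) x - V k x)" by simp
    then have "(\<lambda>n. (V n x - V 0 x) + V 0 x) \<longlonglongrightarrow> (\<Sum>k. V (Suc k) x - V k x) + V 0 x"
      by (intro tendsto_add tendsto_const)
    then show ?case unfolding convergent_def by auto
  qed
qed

section \<open>Lebesgue measure on pairs\<close>

lemma sets_lebesgue_Times_borel:
  fixes \<Omega> :: "'a::euclidean_space set"
  assumes "\<Omega> \<in> sets borel"
  shows "\<Omega> \<times> \<Omega> \<in> sets (lebesgue :: ('a \<times> 'a) measure)"
proof -
  have "\<Omega> \<times> \<Omega> \<in> sets (lborel \<Otimes>\<^sub>M lborel :: ('a \<times> 'a) measure)" using assms by simp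
  then have "\<Omega> \<times> \<Omega> \<in> sets (lborel :: ('a \<times> 'a) measure)" by (simp only: lborel_prod)
  then show ?thesis by (rule sets_completionI_sets)
qed

lemma null_sets_lborel_Times_UNIV:
  fixes B :: "'a::euclidean_space set"
  assumes "B \<in> null_sets lborel"
  shows "B \<times> UNIV \<in> null_sets (lborel :: ('a \<times> 'a) measure)"
    and "UNIV \<times> B \<in> null_sets (lborel :: ('a \<times> 'a) measure)"
  using assms by (auto simp: lborel_prod[symmetric] lborel.emeasure_pair_measure_Times)

lemma AE_lebesgue_on_Times:
  fixes \<Omega> :: "'a::euclidean_space set"
  assumes \<Omega>: "\<Omega> \<in> sets borel" and P: "AE x in lebesgue_on \<Omega>. P x"
  shows "AE z in lebesgue_on (\<Omega> \<times> \<Omega>). P (fst z) \<and> P (snd z)"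
proof -
  have \<Omega>\<Omega>: "\<Omega> \<times> \<Omega> \<in> sets (lebesgue :: ('a \<times> 'a) measure)" by (rule sets_lebesgue_Times_borel[OF \<Omega>])
  obtain N where not_P: "\<And>x. x \<in> space (lebesgue_on \<Omega>) - N \<Longrightarrow> P x"
    and N: "N \<in> null_sets (lebesgue_on \<Omega>)"
    by (rule AE_E3[OF P]) (rule that)
  have N': "N \<in> null_sets lebesgue" using N \<Omega> by (simp add: null_sets_restrict_space)
  obtain B where B: "B \<in> null_sets lborel" "N \<subseteq> B"
    using null_sets_completion_iff2[THEN iffD1, OF N'] by (elim bexE)
  define C where "C = (B \<times> UNIV \<union> UNIV \<times> B) \<inter> (\<Omega> \<times> \<Omega>)"
  have "B \<times> UNIV \<union> UNIV \<times> B \<in> null_sets (lebesgue :: ('a \<times> 'a) measure)"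
    using null_sets.Un[OF null_sets_lborel_Times_UNIV[OF B(1)]] by (rule null_sets_completionI)
  then have "C \<in> null_sets (lebesgue :: ('a \<times> 'a) measure)"
    by (rule null_sets_completion_subset[rotated]) (simp add: C_def)
  moreover have "C \<subseteq> \<Omega> \<times> \<Omega>" unfolding C_def by blast
  ultimately have "C \<in> null_sets (lebesgue_on (\<Omega> \<times> \<Omega>))"
    using null_sets_restrict_space[OF \<Omega>\<Omega>] by blast
  moreover have "{z \<in> space (lebesgue_on (\<Omega> \<times> \<Omega>)). \<not> (P (fst z) \<and> P (snd z))} \<subseteq> C"
  proof
    fix z assume z: "z \<in> {z \<in> space (lebesgue_on (\<Omega> \<times> \<Omega>)). \<not> (P (fst z) \<and> P (snd z))}"
    then have "z \<in> \<Omega> \<times> \<Omega>" using \<Omega>\<Omega> by simp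
    moreover from this have "fst z \<in> N \<or> snd z \<in> N" using not_P \<Omega> z by (auto simp: mem_Times_iff)
    ultimately show "z \<in> C" unfolding C_def using B(2) by (auto simp: mem_Times_iff)
  qed
  ultimately show ?thesis by (rule AE_I')
qed

lemma nn_integral_lborel_affine_unit:
  fixes f :: "'a::euclidean_space \<Rightarrow> ennreal"
  assumes f: "f \<in> borel_measurable borel" and c: "\<bar>c\<bar> = 1"
  shows "(\<integral>\<^sup>+x. f (t + c *\<^sub>R x) \<partial>lborel) = (\<integral>\<^sup>+x. f x \<partial>lborel)"
proof -
  have "(lborel :: 'a measure) = distr lborel borel (\<lambda>x. t + c *\<^sub>R x)"
    using lborel_affine[of c t] c by (auto simp: density_1)
  then have "(\<integral>\<^sup>+x. f x \<partial>lborel) = (\<integral>\<^sup>+x. f x \<partial>distr lborel borel (\<lambda>x. t + c *\<^sub>R x))"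
    by (rule arg_cong)
  also have "\<dots> = (\<integral>\<^sup>+x. f (t + c *\<^sub>R x) \<partial>lborel)" using f by (intro nn_integral_distr) auto
  finally show ?thesis ..
qed

lemma nn_integral_lborel_convolution:
  fixes g a :: "'a::euclidean_space \<Rightarrow> ennreal"
  assumes [measurable]: "g \<in> borel_measurable borel" "a \<in> borel_measurable borel"
  shows "(\<integral>\<^sup>+z. g (fst z) * a (fst z - snd z) \<partial>(lborel :: ('a \<times> 'a) measure))
      = (\<integral>\<^sup>+x. g x \<partial>lborel) * (\<integral>\<^sup>+y. a y \<partial>lborel)"
    and "(\<integral>\<^sup>+z. g (snd z) * a (fst z - snd z) \<partial>(lborel :: ('a \<times> 'a) measure))
      = (\<integral>\<^sup>+x. g x \<partial>lborel) * (\<integral>\<^sup>+y. a y \<partial>lborel)"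
proof -
  have reflect: "(\<integral>\<^sup>+y. a (x - y) \<partial>lborel) = (\<integral>\<^sup>+y. a y \<partial>lborel)" for x
    using nn_integral_lborel_affine_unit[of a "-1" x] by simp
  have shift: "(\<integral>\<^sup>+x. a (x - y) \<partial>lborel) = (\<integral>\<^sup>+x. a x \<partial>lborel)" for y
    using nn_integral_lborel_affine_unit[of a 1 "-y"] by simp
  have "(\<integral>\<^sup>+z. g (fst z) * a (fst z - snd z) \<partial>(lborel :: ('a \<times> 'a) measure))
      = (\<integral>\<^sup>+x. \<integral>\<^sup>+y. g x * a (x - y) \<partial>lborel \<partial>lborel)"
    by (subst lborel_prod[symmetric], subst lborel.nn_integral_fst[symmetric]) auto
  also have "\<dots> = (\<integral>\<^sup>+x. g x \<partial>lborel) * (\<integral>\<^sup>+y. a y \<partial>lborel)"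
    by (simp add: nn_integral_cmult reflect nn_integral_multc)
  finally show "(\<integral>\<^sup>+z. g (fst z) * a (fst z - snd z) \<partial>(lborel :: ('a \<times> 'a) measure))
      = (\<integral>\<^sup>+x. g x \<partial>lborel) * (\<integral>\<^sup>+y. a y \<partial>lborel)" .
  have "(\<integral>\<^sup>+z. g (snd z) * a (fst z - snd z) \<partial>(lborel :: ('a \<times> 'a) measure))
      = (\<integral>\<^sup>+y. \<integral>\<^sup>+x. g y * a (x - y) \<partial>lborel \<partial>lborel)"
    by (subst lborel_prod[symmetric], subst lborel_pair.nn_integral_snd[symmetric]) auto
  also have "\<dots> = (\<integral>\<^sup>+x. g x \<partial>lborel) * (\<integral>\<^sup>+y. a y \<partial>lborel)"
    by (simp add: nn_integral_cmult shift nn_integral_multc)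
  finally show "(\<integral>\<^sup>+z. g (snd z) * a (fst z - snd z) \<partial>(lborel :: ('a \<times> 'a) measure))
      = (\<integral>\<^sup>+x. g x \<partial>lborel) * (\<integral>\<^sup>+y. a y \<partial>lborel)" .
qed

lemma lebesgue_on_measurable_AE_eq_borel:
  fixes u :: "'a::euclidean_space \<Rightarrow> complex"
  assumes S: "S \<in> sets lebesgue" and u: "u \<in> borel_measurable (lebesgue_on S)"
  obtains u' where "u' \<in> borel_measurable borel" "AE x in lebesgue_on S. u x = u' x"
proof -
  define ue where "ue x = (if x \<in> S then u x else 0)" for x
  have ue: "ue \<in> borel_measurable lebesgue"
    unfolding ue_def using measurable_restrict_space_iff[of S lebesgue 0 borel u] S u by simp
  then have "(\<lambda>x. Re (ue x)) \<in> borel_measurable (completion lborel)"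
    and "(\<lambda>x. Im (ue x)) \<in> borel_measurable (completion lborel)" by measurable
  then obtain g1 g2 where g1: "g1 \<in> borel_measurable lborel" "AE x in lborel. Re (ue x) = g1 x"
    and g2: "g2 \<in> borel_measurable lborel" "AE x in lborel. Im (ue x) = g2 x"
    using completion_ex_borel_measurable_real by metis
  define u' where "u' x = complex_of_real (g1 x) + \<i> * complex_of_real (g2 x)" for x
  have "g1 \<in> borel_measurable borel" "g2 \<in> borel_measurable borel" using g1 g2 by auto
  then have "u' \<in> borel_measurable borel" unfolding u'_def by measurable
  moreover have "AE x in lborel. ue x = u' x"
    using g1(2) g2(2) by eventually_elim (auto simp: u'_def complex_eq_iff)
  then have "AE x in lebesgue_on S. u x = u' x"
    using S by (subst AE_restrict_space_iff) (auto dest: AE_completion elim!: eventually_mono simp: ue_def)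
  ultimately show ?thesis using that by blast
qed

lemma borel_measurable_lebesgue_on_if_borel:
  "f \<in> borel_measurable borel \<Longrightarrow> f \<in> borel_measurable (lebesgue_on S)"
  by (intro measurable_restrict_space1 measurable_completion) simp

lemma borel_measurable_pair_compose:
  fixes f :: "'a::euclidean_space \<Rightarrow> 'b::topological_space"
  assumes "f \<in> borel_measurable borel"
  shows "(\<lambda>z::'a \<times> 'a. f (fst z)) \<in> borel_measurable borel"
    and "(\<lambda>z::'a \<times> 'a. f (snd z)) \<in> borel_measurable borel"
    and "(\<lambda>z::'a \<times> 'a. f (fst z - snd z)) \<in> borel_measurable borel"
  by (intro measurable_compose[OF _ assms] borel_measurable_continuous_onI continuous_intros)+

section \<open>The seminorm as a Luxemburg functional\<close>

definition pair_diff :: "('a \<Rightarrow> complex) \<Rightarrow> 'a \<times> 'a \<Rightarrow> real" where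
  "pair_diff u z = cmod (u (fst z) - u (snd z))"

text \<open>\<^const>\<open>ennreal\<close> cuts off negative integrands in \<^const>\<open>Ffun\<close>, so only the positive part of \<open>a\<close>
  enters.\<close>
definition kernel_integrand ::
    "(real \<Rightarrow> 'a \<Rightarrow> 'a \<Rightarrow> real) \<Rightarrow> ('a::real_vector \<Rightarrow> real) \<Rightarrow> real \<Rightarrow> 'a \<times> 'a \<Rightarrow> real" where
  "kernel_integrand \<phi> a t z = max 0 (a (fst z - snd z)) * \<phi> t (fst z) (snd z)"

lemma pair_diff_nonneg [simp]: "pair_diff u z \<ge> 0"
  unfolding pair_diff_def by simp

lemma pair_diff_divide: "l > 0 \<Longrightarrow> pair_diff (\<lambda>x. u x / complex_of_real l) z = pair_diff u z / l"
  unfolding pair_diff_def by (simp add: diff_divide_distrib[symmetric] norm_divide)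

lemma pair_diff_powr_le:
  assumes p: "p \<ge> 1"
  shows "pair_diff w z powr p \<le> 2 powr p * (cmod (w (fst z)) powr p + cmod (w (snd z)) powr p)"
proof -
  define m where "m = max (cmod (w (fst z))) (cmod (w (snd z)))"
  have "pair_diff w z \<le> cmod (w (fst z)) + cmod (w (snd z))"
    unfolding pair_diff_def by (rule norm_triangle_ineq4)
  also have "\<dots> \<le> 2 * m" unfolding m_def by simp
  finally have "pair_diff w z powr p \<le> (2 * m) powr p" using p by (intro powr_mono2) auto
  also have "\<dots> = 2 powr p * m powr p" by (simp add: powr_mult m_def)
  also have "m powr p \<le> cmod (w (fst z)) powr p + cmod (w (snd z)) powr p"
    unfolding m_def by (simp add: max_def)
  finally show ?thesis by simp
qed

lemma borel_measurable_pair_diff: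
  fixes w :: "'a::euclidean_space \<Rightarrow> complex"
  assumes "w \<in> borel_measurable borel"
  shows "pair_diff w \<in> borel_measurable borel"
  using borel_measurable_pair_compose(1,2)[OF assms] unfolding pair_diff_def[abs_def] by measurable

lemma nn_integral_pair_diff_powr_le:
  fixes \<Omega> :: "'a::euclidean_space set" and w :: "'a \<Rightarrow> complex" and a :: "'a \<Rightarrow> real"
  assumes \<Omega>: "\<Omega> \<in> sets borel" and [measurable]: "w \<in> borel_measurable borel" "a \<in> borel_measurable borel"
    and p: "p \<ge> 1"
  shows "(\<integral>\<^sup>+z. ennreal (max 0 (a (fst z - snd z)) * pair_diff w z powr p) \<partial>lebesgue_on (\<Omega> \<times> \<Omega>))
    \<le> ennreal (2 powr p) * (2 * (Lp_integral \<Omega> p w * (\<integral>\<^sup>+y. ennreal (a y) \<partial>lborel)))"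
proof -
  define g where "g x = ennreal (cmod (w x) powr p) * indicator \<Omega> x" for x
  have [measurable]: "\<Omega> \<in> sets borel" using \<Omega> .
  have g_meas [measurable]: "g \<in> borel_measurable borel" unfolding g_def by measurable
  define A where "A z = ennreal (a (fst z - snd z))" for z :: "'a \<times> 'a"
  have a_meas: "(\<lambda>y. ennreal (a y)) \<in> borel_measurable borel" by measurable
  note meas = borel_measurable_pair_compose(1,2)[OF g_meas]
    borel_measurable_pair_compose(3)[OF a_meas, folded A_def]
  have "(\<integral>\<^sup>+z. ennreal (max 0 (a (fst z - snd z)) * pair_diff w z powr p) \<partial>lebesgue_on (\<Omega> \<times> \<Omega>))
     = (\<integral>\<^sup>+z. ennreal (max 0 (a (fst z - snd z)) * pair_diff w z powr p) * indicator (\<Omega> \<times> \<Omega>) z \<partial>lebesgue)"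
    using sets_lebesgue_Times_borel[OF \<Omega>] by (simp add: nn_integral_restrict_space)
  also have "\<dots> \<le> (\<integral>\<^sup>+z. ennreal (2 powr p) * (g (fst z) * A z + g (snd z) * A z) \<partial>lebesgue)"
  proof (intro nn_integral_mono)
    fix z :: "'a \<times> 'a"
    define m where "m = max 0 (a (fst z - snd z))"
    have "m * pair_diff w z powr p \<le> m * (2 powr p * (cmod (w (fst z)) powr p + cmod (w (snd z)) powr p))"
      using pair_diff_powr_le[OF p, of w z] unfolding m_def by (rule mult_left_mono) simp
    then have "m * pair_diff w z powr p \<le> 2 powr p * (cmod (w (fst z)) powr p * m + cmod (w (snd z)) powr p * m)"
      by (simp add: algebra_simps)
    then have F: "ennreal (m * pair_diff w z powr p)
        \<le> ennreal (2 powr p) * (ennreal (cmod (w (fst z)) powr p) * ennreal m + ennreal (cmod (w (snd z)) powr p) * ennreal m)"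
      unfolding m_def by (simp add: ennreal_leI ennreal_mult[symmetric] ennreal_plus[symmetric] del: ennreal_plus)
    have "ennreal m = A z" unfolding m_def A_def by (simp add: ennreal_max_0)
    have "ennreal (m * pair_diff w z powr p) * indicator (\<Omega> \<times> \<Omega>) z
        \<le> ennreal (2 powr p) * (g (fst z) * A z + g (snd z) * A z)"
    proof (cases "z \<in> \<Omega> \<times> \<Omega>")
      case True
      then have "g (fst z) = ennreal (cmod (w (fst z)) powr p)" "g (snd z) = ennreal (cmod (w (snd z)) powr p)"
        unfolding g_def by (simp_all add: mem_Times_iff)
      with F True \<open>ennreal m = A z\<close> show ?thesis by simp
    qed simp
    then show "ennreal (max 0 (a (fst z - snd z)) * pair_diff w z powr p) * indicator (\<Omega> \<times> \<Omega>) z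
        \<le> ennreal (2 powr p) * (g (fst z) * A z + g (snd z) * A z)"
      unfolding m_def .
  qed
  also have "\<dots> = ennreal (2 powr p) * ((\<integral>\<^sup>+z. g (fst z) * A z \<partial>lborel) + (\<integral>\<^sup>+z. g (snd z) * A z \<partial>lborel))"
    unfolding nn_integral_completion using meas by (simp add: nn_integral_cmult nn_integral_add)
  also have "\<dots> = ennreal (2 powr p) * (2 * ((\<integral>\<^sup>+x. g x \<partial>lborel) * (\<integral>\<^sup>+y. ennreal (a y) \<partial>lborel)))"
    unfolding A_def nn_integral_lborel_convolution[OF g_meas a_meas] by (simp only: mult_2)
  also have "(\<integral>\<^sup>+x. g x \<partial>lborel) = Lp_integral \<Omega> p w"
    unfolding Lp_integral_def g_def by (rule nn_integral_completion[symmetric])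
  finally show ?thesis .
qed

lemma seminorm_p_eq_luxemburg:
  fixes \<Omega> :: "'a::euclidean_space set"
  assumes \<Omega>: "\<Omega> \<in> sets borel" and phi_nonneg: "\<forall>t\<ge>0. \<forall>x\<in>\<Omega>. \<forall>y\<in>\<Omega>. \<phi> t x y \<ge> 0"
  shows "seminorm_p \<Omega> \<phi> a u = luxemburg (lebesgue_on (\<Omega> \<times> \<Omega>)) (kernel_integrand \<phi> a) (pair_diff u)"
proof -
  have \<Omega>\<Omega>: "\<Omega> \<times> \<Omega> \<in> sets lebesgue" by (rule sets_lebesgue_Times_borel[OF \<Omega>])
  have "Ffun \<Omega> \<phi> a (\<lambda>x. u x / complex_of_real l) =
      modular (lebesgue_on (\<Omega> \<times> \<Omega>)) (kernel_integrand \<phi> a) (\<lambda>z. pair_diff u z / l)" if "l > 0" for l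
  proof -
    have pointwise: "ennreal (\<phi> (pair_diff u z / l) (fst z) (snd z) * a (fst z - snd z))
        = ennreal (kernel_integrand \<phi> a (pair_diff u z / l) z)" if "z \<in> \<Omega> \<times> \<Omega>" for z
    proof -
      have "pair_diff u z / l \<ge> 0" using \<open>l > 0\<close> by simp
      then have "\<phi> (pair_diff u z / l) (fst z) (snd z) \<ge> 0"
        using phi_nonneg that by (auto simp: mem_Times_iff)
      then show ?thesis unfolding kernel_integrand_def
        by (cases "a (fst z - snd z) \<ge> 0") (auto simp: ennreal_neg mult_nonneg_nonpos2 mult.commute)
    qed
    have "Ffun \<Omega> \<phi> a (\<lambda>x. u x / complex_of_real l) = (\<integral>\<^sup>+z. ennreal
        (\<phi> (pair_diff (\<lambda>x. u x / complex_of_real l) z) (fst z) (snd z) * a (fst z - snd z)) \<partial>lebesgue_on (\<Omega> \<times> \<Omega>))"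
      unfolding Ffun_def pair_diff_def using \<Omega>\<Omega> by (simp add: nn_integral_restrict_space)
    also have "\<dots> = modular (lebesgue_on (\<Omega> \<times> \<Omega>)) (kernel_integrand \<phi> a) (\<lambda>z. pair_diff u z / l)"
      unfolding modular_def pair_diff_divide[OF \<open>l > 0\<close>] using \<Omega>\<Omega>
      by (intro nn_integral_cong) (simp add: pointwise)
    finally show ?thesis .
  qed
  then show ?thesis unfolding seminorm_p_def luxemburg_def
    by (intro arg_cong[where f = "\<lambda>X. Inf (ennreal ` X)"]) auto
qed

lemma Lp_norm_le_fnorm: "Lp_norm \<Omega> pm u \<le> fnorm \<Omega> \<phi> a pm u"
  unfolding fnorm_def by (simp add: add_increasing)

lemma seminorm_p_le_fnorm: "seminorm_p \<Omega> \<phi> a u \<le> fnorm \<Omega> \<phi> a pm u"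
  unfolding fnorm_def by (simp add: add_increasing2)

lemma Lspace_iff:
  "u \<in> Lspace \<Omega> \<phi> a pm \<longleftrightarrow> u \<in> borel_measurable (lebesgue_on \<Omega>) \<and> fnorm \<Omega> \<phi> a pm u < top"
proof
  assume "u \<in> borel_measurable (lebesgue_on \<Omega>) \<and> fnorm \<Omega> \<phi> a pm u < top"
  moreover from this have "Lp_norm \<Omega> pm u < top" using order.strict_trans1[OF Lp_norm_le_fnorm] by blast
  ultimately show "u \<in> Lspace \<Omega> \<phi> a pm"
    using Lp_space_subset_Lp_loc_space unfolding Lspace_def Lp_space_def by auto
qed (simp add: Lspace_def Lp_loc_space_def)

lemma Lspace_subset_Lp_space: "Lspace \<Omega> \<phi> a pm \<subseteq> Lp_space \<Omega> pm"
  using Lspace_iff order.strict_trans1[OF Lp_norm_le_fnorm] unfolding Lp_space_def by blast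

section \<open>The space \<open>L(\<Omega>)\<close>\<close>

locale nonlocal_functional =
  fixes \<Omega> :: "'a::euclidean_space set" and \<phi> :: "real \<Rightarrow> 'a \<Rightarrow> 'a \<Rightarrow> real" and a :: "'a \<Rightarrow> real"
    and pm pp \<beta> c1 :: real
  assumes open_domain: "open \<Omega>"
    and integrable_kernel: "integrable lborel a"
    and phi_nonneg: "\<forall>t\<ge>0. \<forall>x\<in>\<Omega>. \<forall>y\<in>\<Omega>. \<phi> t x y \<ge> 0"
    and C1: "cond_C1 \<Omega> \<phi>" and C2: "cond_C2 \<Omega> \<phi>" and C3: "cond_C3 \<Omega> \<phi> pm pp \<beta>" and C4: "cond_C4 \<Omega> \<phi> c1"
begin

lemma domain_sets [simp]: "\<Omega> \<in> sets borel" "\<Omega> \<in> sets lebesgue" "\<Omega> \<times> \<Omega> \<in> sets lebesgue"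
  using open_domain sets_lebesgue_Times_borel[of \<Omega>] by simp_all

lemma parameter_bounds: "1 < pm" "pm \<le> pp" "1 \<le> \<beta>" "0 < c1"
  using C3 C4 unfolding cond_C3_def cond_C4_def by auto

lemma kernel_borel_measurable [measurable]: "a \<in> borel_measurable borel"
  using borel_measurable_integrable[OF integrable_kernel] by simp

lemma phi_growth:
  "AE z in lebesgue_on (\<Omega> \<times> \<Omega>). \<forall>t\<ge>0. \<phi> t (fst z) (snd z) \<le> \<beta> * c1 * (t powr pm + t powr pp)"
proof -
  have "AE z in lebesgue_on (\<Omega> \<times> \<Omega>).
      (\<forall>s t. 0 < s \<and> s \<le> t \<longrightarrow> \<phi> s (fst z) (snd z) / s powr pm \<le> \<beta> * (\<phi> t (fst z) (snd z) / t powr pm)) \<and>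
      (\<forall>s t. 0 < s \<and> s \<le> t \<longrightarrow> \<beta> * (\<phi> s (fst z) (snd z) / s powr pp) \<ge> \<phi> t (fst z) (snd z) / t powr pp)"
    using C3 unfolding cond_C3_def by blast
  moreover have "AE z in lebesgue_on (\<Omega> \<times> \<Omega>). \<phi> 1 (fst z) (snd z) \<le> c1 \<and> \<phi> 0 (fst z) (snd z) = 0"
    using C4 unfolding cond_C4_def by (auto elim: eventually_mono)
  ultimately show ?thesis
  proof eventually_elim
    case (elim z)
    show ?case
    proof (intro allI impI)
      fix t :: real assume "t \<ge> 0"
      then consider "t = 0" | "t > 0" by linarith
      then show "\<phi> t (fst z) (snd z) \<le> \<beta> * c1 * (t powr pm + t powr pp)"
      proof cases
        case 2
        then show ?thesis using elim parameter_bounds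
          by (intro growth_bound_if_almost_monotone[where g = "\<lambda>t. \<phi> t (fst z) (snd z)"]) simp_all
      qed (use elim in simp)
    qed
  qed
qed

text \<open>Each \<open>\<epsilon>\<close> in (C2) comes with its own null set; the countably many \<open>\<epsilon> = 1 / (n + 1)\<close>
  suffice.\<close>
lemma phi_midpoint_convex:
  "AE z in lebesgue_on (\<Omega> \<times> \<Omega>). \<forall>s t. s > 0 \<longrightarrow> t > 0 \<longrightarrow>
     \<phi> ((s + t) / 2) (fst z) (snd z) \<le> (\<phi> s (fst z) (snd z) + \<phi> t (fst z) (snd z)) / 2"
proof -
  let ?Q = "\<lambda>(n::nat) z. \<exists>\<delta>. 0 < \<delta> \<and> \<delta> < 1 \<and> (\<forall>s t. s > 0 \<and> t > 0 \<and> \<bar>s - t\<bar> \<ge> 1 / real (Suc n) * max s t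
     \<longrightarrow> \<phi> ((s + t) / 2) (fst z) (snd z) \<le> (1 - \<delta>) * ((\<phi> s (fst z) (snd z) + \<phi> t (fst z) (snd z)) / 2))"
  have "AE z in lebesgue_on (\<Omega> \<times> \<Omega>). ?Q n z" for n
  proof -
    obtain \<delta> where "0 < \<delta>" "\<delta> < 1" and "AE z in lebesgue_on (\<Omega> \<times> \<Omega>). \<forall>s t. s > 0 \<and> t > 0 \<and>
        \<bar>s - t\<bar> \<ge> 1 / real (Suc n) * max s t \<longrightarrow>
        \<phi> ((s + t) / 2) (fst z) (snd z) \<le> (1 - \<delta>) * ((\<phi> s (fst z) (snd z) + \<phi> t (fst z) (snd z)) / 2)"
      using C2[unfolded cond_C2_def, rule_format, of "1 / real (Suc n)"] by auto
    then show ?thesis by (auto elim!: eventually_mono)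
  qed
  then have "AE z in lebesgue_on (\<Omega> \<times> \<Omega>). \<forall>n. ?Q n z" by (simp add: AE_all_countable)
  moreover have "AE z in lebesgue_on (\<Omega> \<times> \<Omega>). z \<in> \<Omega> \<times> \<Omega>" by (rule AE_I2) simp
  ultimately show ?thesis
  proof eventually_elim
    case (elim z)
    show ?case
    proof (intro allI impI)
      fix s t :: real assume "s > 0" "t > 0"
      show "\<phi> ((s + t) / 2) (fst z) (snd z) \<le> (\<phi> s (fst z) (snd z) + \<phi> t (fst z) (snd z)) / 2"
      proof (cases "s = t")
        case False
        have "max s t > 0" using \<open>s > 0\<close> by simp
        then have "\<bar>s - t\<bar> / max s t > 0" using False by simp
        then obtain n where "inverse (real (Suc n)) < \<bar>s - t\<bar> / max s t"
          using reals_Archimedean by blast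
        then have "1 / real (Suc n) * max s t \<le> \<bar>s - t\<bar>"
          using \<open>max s t > 0\<close> by (simp add: field_simps)
        moreover obtain \<delta> where "0 < \<delta>" "\<delta> < 1" and "\<forall>s t. s > 0 \<and> t > 0 \<and> \<bar>s - t\<bar> \<ge> 1 / real (Suc n) * max s t
            \<longrightarrow> \<phi> ((s + t) / 2) (fst z) (snd z) \<le> (1 - \<delta>) * ((\<phi> s (fst z) (snd z) + \<phi> t (fst z) (snd z)) / 2)"
          using elim by blast
        ultimately have "\<phi> ((s + t) / 2) (fst z) (snd z) \<le> (1 - \<delta>) * ((\<phi> s (fst z) (snd z) + \<phi> t (fst z) (snd z)) / 2)"
          using \<open>s > 0\<close> \<open>t > 0\<close> by blast
        also have "\<dots> \<le> (\<phi> s (fst z) (snd z) + \<phi> t (fst z) (snd z)) / 2"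
          using \<open>0 < \<delta>\<close> \<open>\<delta> < 1\<close> phi_nonneg elim \<open>s > 0\<close> \<open>t > 0\<close>
          by (intro mult_left_le_one_le) (auto simp: mem_Times_iff)
        finally show ?thesis .
      qed simp
    qed
  qed
qed

lemma orlicz_kernel: "orlicz_integrand (lebesgue_on (\<Omega> \<times> \<Omega>)) (kernel_integrand \<phi> a)"
proof -
  have "AE z in lebesgue_on (\<Omega> \<times> \<Omega>). \<phi> 0 (fst z) (snd z) = 0"
    using C4 unfolding cond_C4_def by (auto elim: eventually_mono)
  moreover have "AE z in lebesgue_on (\<Omega> \<times> \<Omega>). z \<in> \<Omega> \<times> \<Omega>" by (rule AE_I2) simp
  ultimately show ?thesis
    using phi_midpoint_convex phi_growth unfolding orlicz_integrand_def
  proof eventually_elim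
    case (elim z)
    define g where "g t = \<phi> t (fst z) (snd z)" for t
    have g_nonneg: "g t \<ge> 0" if "t \<ge> 0" for t
      using phi_nonneg elim that unfolding g_def by (auto simp: mem_Times_iff)
    have g_le: "g t \<le> \<beta> * c1 * (t powr pm + t powr pp)" if "t \<ge> 0" for t
      using elim that unfolding g_def by blast
    have powr_lim: "((\<lambda>t. t powr q) \<longlongrightarrow> 0) (at_right 0)" if "q > 0" for q :: real
      using that by (intro tendsto_zero_powrI) (auto simp: eventually_at_right_less eventually_at_filter)
    have "((\<lambda>t. t powr pm + t powr pp) \<longlongrightarrow> 0 + 0) (at_right 0)"
      using parameter_bounds by (intro tendsto_add powr_lim) auto
    from tendsto_mult_left[OF this, of "\<beta> * c1"]
    have "((\<lambda>t. \<beta> * c1 * (t powr pm + t powr pp)) \<longlongrightarrow> 0) (at_right 0)" by simp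
    then have lim0: "(g \<longlongrightarrow> 0) (at_right 0)"
      using g_nonneg g_le by (intro tendsto_sandwich[of "\<lambda>_. 0" g _ "\<lambda>t. \<beta> * c1 * (t powr pm + t powr pp)"])
        (auto simp: eventually_at_right_less eventually_at_filter)
    have bounded: "\<exists>M. \<forall>t\<in>{0<..T}. g t \<le> M" for T
    proof (intro exI ballI)
      fix t assume "t \<in> {0<..T}"
      then have "\<beta> * c1 * (t powr pm + t powr pp) \<le> \<beta> * c1 * (T powr pm + T powr pp)"
        using parameter_bounds by (intro mult_left_mono add_mono powr_mono2) auto
      moreover have "g t \<le> \<beta> * c1 * (t powr pm + t powr pp)" using g_le \<open>t \<in> {0<..T}\<close> by simp
      ultimately show "g t \<le> \<beta> * c1 * (T powr pm + T powr pp)" by linarith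
    qed
    have mid: "g ((s + t) / 2) \<le> (g s + g t) / 2" if "s > 0" "t > 0" for s t
      using elim that unfolding g_def by blast
    have "g 0 = 0" using elim unfolding g_def by simp
    then have "continuous_on {0..} g" "convex_on {0..} g"
      using midpoint_convex_imp_convex_on_nonneg[OF mid _ lim0 bounded] by auto
    moreover have "kernel_integrand \<phi> a t z = max 0 (a (fst z - snd z)) * g t" for t
      unfolding kernel_integrand_def g_def ..
    ultimately show ?case
      using \<open>g 0 = 0\<close> g_nonneg by (simp add: convex_on_cmul continuous_on_mult_left)
  qed
qed

lemma kernel_integrand_measurable:
  assumes u: "u \<in> Lp_space \<Omega> pm" and l: "l > 0"
  shows "(\<lambda>z. kernel_integrand \<phi> a (pair_diff u z / l) z) \<in> borel_measurable (lebesgue_on (\<Omega> \<times> \<Omega>))"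
proof -
  have "(\<lambda>x. complex_of_real (1 / l) * u x) \<in> Lp_space \<Omega> pm"
    using parameter_bounds by (intro Lp_space_cmult u) auto
  moreover have "(\<lambda>x. complex_of_real (1 / l) * u x) = (\<lambda>x. u x / complex_of_real l)"
    by (simp add: field_simps)
  ultimately have "(\<lambda>x. u x / complex_of_real l) \<in> Lp_loc_space \<Omega> 1"
    using Lp_space_subset_Lp_loc_space_1[of pm \<Omega>] parameter_bounds by auto
  from bspec[OF C1[unfolded cond_C1_def] this]
  have phi_meas: "(\<lambda>z. \<phi> (pair_diff u z / l) (fst z) (snd z)) \<in> borel_measurable (lebesgue_on (\<Omega> \<times> \<Omega>))"
    unfolding pair_diff_def by (simp add: pair_diff_divide[OF l, unfolded pair_diff_def])
  have "(\<lambda>z::'a \<times> 'a. max 0 (a (fst z - snd z))) \<in> borel_measurable borel"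
    using borel_measurable_pair_compose(3)[OF kernel_borel_measurable] by measurable
  from borel_measurable_lebesgue_on_if_borel[OF this] phi_meas show ?thesis
    unfolding kernel_integrand_def by (rule borel_measurable_times)
qed

lemma seminorm_p_eq: "seminorm_p \<Omega> \<phi> a u = luxemburg (lebesgue_on (\<Omega> \<times> \<Omega>)) (kernel_integrand \<phi> a) (pair_diff u)"
  by (rule seminorm_p_eq_luxemburg[OF domain_sets(1) phi_nonneg])

lemma seminorm_p_triangle:
  assumes "u \<in> Lp_space \<Omega> pm" "v \<in> Lp_space \<Omega> pm"
  shows "seminorm_p \<Omega> \<phi> a (\<lambda>x. u x + v x) \<le> seminorm_p \<Omega> \<phi> a u + seminorm_p \<Omega> \<phi> a v"
  unfolding seminorm_p_eq
proof (rule luxemburg_triangle[OF orlicz_kernel pair_diff_nonneg pair_diff_nonneg])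
  have "pair_diff (\<lambda>x. u x + v x) z \<le> pair_diff u z + pair_diff v z" for z
    unfolding pair_diff_def by (metis add_diff_add norm_triangle_ineq)
  then show "AE z in lebesgue_on (\<Omega> \<times> \<Omega>). 0 \<le> pair_diff (\<lambda>x. u x + v x) z \<and>
      pair_diff (\<lambda>x. u x + v x) z \<le> pair_diff u z + pair_diff v z" by (simp add: AE_I2)
  show "(\<lambda>z. kernel_integrand \<phi> a (pair_diff u z / l) z) \<in> borel_measurable (lebesgue_on (\<Omega> \<times> \<Omega>))"
    and "(\<lambda>z. kernel_integrand \<phi> a (pair_diff v z / l) z) \<in> borel_measurable (lebesgue_on (\<Omega> \<times> \<Omega>))"
    if "l > 0" for l
    using kernel_integrand_measurable[OF assms(1) that] kernel_integrand_measurable[OF assms(2) that] .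
qed

lemma seminorm_p_cmult: "seminorm_p \<Omega> \<phi> a (\<lambda>x. c * u x) = ennreal (cmod c) * seminorm_p \<Omega> \<phi> a u"
proof (cases "c = 0")
  case True
  then show ?thesis unfolding seminorm_p_eq
    by (simp add: luxemburg_eq_0[OF orlicz_kernel] pair_diff_def)
next
  case False
  have "pair_diff (\<lambda>x. c * u x) = (\<lambda>z. cmod c * pair_diff u z)"
    unfolding pair_diff_def by (auto simp: right_diff_distrib[symmetric] norm_mult)
  then show ?thesis unfolding seminorm_p_eq using False
    by (simp add: luxemburg_cmult[OF orlicz_kernel])
qed

lemma seminorm_p_cong_AE:
  assumes "AE x in lebesgue_on \<Omega>. u x = v x"
  shows "seminorm_p \<Omega> \<phi> a u = seminorm_p \<Omega> \<phi> a v"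
  unfolding seminorm_p_eq using AE_lebesgue_on_Times[OF domain_sets(1) assms]
  by (intro luxemburg_cong_AE) (auto simp: pair_diff_def elim: eventually_mono)

lemma seminorm_p_eq_0:
  assumes "AE x in lebesgue_on \<Omega>. u x = 0"
  shows "seminorm_p \<Omega> \<phi> a u = 0"
  unfolding seminorm_p_eq using AE_lebesgue_on_Times[OF domain_sets(1) assms]
  by (intro luxemburg_eq_0[OF orlicz_kernel]) (auto simp: pair_diff_def elim: eventually_mono)

lemma seminorm_p_Fatou:
  assumes W: "\<And>k. W k \<in> Lp_space \<Omega> pm" and lim: "AE x in lebesgue_on \<Omega>. (\<lambda>k. W k x) \<longlonglongrightarrow> w x"
    and e: "e > 0" and less: "\<forall>\<^sub>F k in sequentially. seminorm_p \<Omega> \<phi> a (W k) < ennreal e"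
  shows "seminorm_p \<Omega> \<phi> a w \<le> ennreal e"
  unfolding seminorm_p_eq
proof (rule luxemburg_Fatou[OF orlicz_kernel e])
  show "AE z in lebesgue_on (\<Omega> \<times> \<Omega>). (\<lambda>k. pair_diff (W k) z) \<longlonglongrightarrow> pair_diff w z"
    using AE_lebesgue_on_Times[OF domain_sets(1) lim]
    by eventually_elim (auto simp: pair_diff_def intro!: tendsto_intros)
  show "(\<lambda>z. kernel_integrand \<phi> a (pair_diff (W k) z / e) z) \<in> borel_measurable (lebesgue_on (\<Omega> \<times> \<Omega>))"
    for k using kernel_integrand_measurable[OF W e] .
  show "\<forall>\<^sub>F k in sequentially. luxemburg (lebesgue_on (\<Omega> \<times> \<Omega>)) (kernel_integrand \<phi> a) (pair_diff (W k)) < ennreal e"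
    using less unfolding seminorm_p_eq .
qed simp_all

definition kernel_mass :: real where
  "kernel_mass = enn2real (\<integral>\<^sup>+y. ennreal (a y) \<partial>lborel)"

lemma kernel_mass: "(\<integral>\<^sup>+y. ennreal (a y) \<partial>lborel) = ennreal kernel_mass" "kernel_mass \<ge> 0"
proof -
  have "(\<integral>\<^sup>+y. ennreal (a y) \<partial>lborel) \<le> (\<integral>\<^sup>+y. ennreal (norm (a y)) \<partial>lborel)"
    by (intro nn_integral_mono ennreal_leI) simp
  also have "\<dots> < \<infinity>" using integrable_kernel unfolding integrable_iff_bounded by simp
  finally show "(\<integral>\<^sup>+y. ennreal (a y) \<partial>lborel) = ennreal kernel_mass"
    unfolding kernel_mass_def by (simp add: less_top)
qed (simp add: kernel_mass_def)

lemma modular_kernel_le_powr_integrals: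
  assumes w: "w \<in> borel_measurable borel"
  shows "modular (lebesgue_on (\<Omega> \<times> \<Omega>)) (kernel_integrand \<phi> a) (pair_diff w) \<le> ennreal (\<beta> * c1) *
    ((\<integral>\<^sup>+z. ennreal (max 0 (a (fst z - snd z)) * pair_diff w z powr pm) \<partial>lebesgue_on (\<Omega> \<times> \<Omega>)) +
     (\<integral>\<^sup>+z. ennreal (max 0 (a (fst z - snd z)) * pair_diff w z powr pp) \<partial>lebesgue_on (\<Omega> \<times> \<Omega>)))"
proof -
  have "(\<lambda>z. ennreal (max 0 (a (fst z - snd z)) * pair_diff w z powr q)) \<in> borel_measurable borel" for q
    using borel_measurable_pair_diff[OF w] borel_measurable_pair_compose(3)[OF kernel_borel_measurable]
    by measurable
  note meas = borel_measurable_lebesgue_on_if_borel[OF this]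
  have "modular (lebesgue_on (\<Omega> \<times> \<Omega>)) (kernel_integrand \<phi> a) (pair_diff w) \<le>
      (\<integral>\<^sup>+z. ennreal (\<beta> * c1) * ennreal (max 0 (a (fst z - snd z)) * pair_diff w z powr pm) +
        ennreal (\<beta> * c1) * ennreal (max 0 (a (fst z - snd z)) * pair_diff w z powr pp) \<partial>lebesgue_on (\<Omega> \<times> \<Omega>))"
    unfolding modular_def using phi_growth
  proof (rule nn_integral_mono_AE[OF eventually_mono])
    fix z assume "\<forall>t\<ge>0. \<phi> t (fst z) (snd z) \<le> \<beta> * c1 * (t powr pm + t powr pp)"
    then have "\<phi> (pair_diff w z) (fst z) (snd z) \<le> \<beta> * c1 * (pair_diff w z powr pm + pair_diff w z powr pp)"
      by simp
    then have "max 0 (a (fst z - snd z)) * \<phi> (pair_diff w z) (fst z) (snd z)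
        \<le> max 0 (a (fst z - snd z)) * (\<beta> * c1 * (pair_diff w z powr pm + pair_diff w z powr pp))"
      by (rule mult_left_mono) simp
    then have "kernel_integrand \<phi> a (pair_diff w z) z \<le>
        \<beta> * c1 * (max 0 (a (fst z - snd z)) * pair_diff w z powr pm) +
        \<beta> * c1 * (max 0 (a (fst z - snd z)) * pair_diff w z powr pp)"
      unfolding kernel_integrand_def by (simp add: algebra_simps)
    then show "ennreal (kernel_integrand \<phi> a (pair_diff w z) z) \<le>
        ennreal (\<beta> * c1) * ennreal (max 0 (a (fst z - snd z)) * pair_diff w z powr pm) +
        ennreal (\<beta> * c1) * ennreal (max 0 (a (fst z - snd z)) * pair_diff w z powr pp)"
      using parameter_bounds by (simp add: ennreal_leI ennreal_mult[symmetric] ennreal_plus[symmetric]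
        del: ennreal_plus)
  qed
  also have "\<dots> = ennreal (\<beta> * c1) *
    ((\<integral>\<^sup>+z. ennreal (max 0 (a (fst z - snd z)) * pair_diff w z powr pm) \<partial>lebesgue_on (\<Omega> \<times> \<Omega>)) +
     (\<integral>\<^sup>+z. ennreal (max 0 (a (fst z - snd z)) * pair_diff w z powr pp) \<partial>lebesgue_on (\<Omega> \<times> \<Omega>)))"
    using meas by (simp add: nn_integral_add nn_integral_cmult distrib_left)
  finally show ?thesis .
qed

lemma modular_kernel_le:
  assumes w: "w \<in> borel_measurable borel" and \<epsilon>: "\<epsilon> \<ge> 0"
    and small: "Lp_integral \<Omega> pm w \<le> ennreal \<epsilon>" "Lp_integral \<Omega> pp w \<le> ennreal \<epsilon>"
  shows "modular (lebesgue_on (\<Omega> \<times> \<Omega>)) (kernel_integrand \<phi> a) (pair_diff w)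
    \<le> ennreal (\<beta> * c1 * (4 * 2 powr pp * kernel_mass * \<epsilon>))"
proof -
  define J where "J q = (\<integral>\<^sup>+z. ennreal (max 0 (a (fst z - snd z)) * pair_diff w z powr q)
    \<partial>lebesgue_on (\<Omega> \<times> \<Omega>))" for q
  have J: "J q \<le> ennreal (2 powr pp * (2 * (\<epsilon> * kernel_mass)))" if "q = pm \<or> q = pp" for q
  proof -
    have q: "1 \<le> q" "q \<le> pp" "Lp_integral \<Omega> q w \<le> ennreal \<epsilon>" using that parameter_bounds small by auto
    have "J q \<le> ennreal (2 powr q) * (2 * (Lp_integral \<Omega> q w * ennreal kernel_mass))"
      unfolding J_def kernel_mass(1)[symmetric]
      using nn_integral_pair_diff_powr_le[OF domain_sets(1) w kernel_borel_measurable q(1)] .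
    also have "\<dots> \<le> ennreal (2 powr pp) * (2 * (ennreal \<epsilon> * ennreal kernel_mass))"
      using q by (intro mult_mono add_mono ennreal_leI powr_mono) auto
    finally show ?thesis using \<epsilon> kernel_mass(2) by (simp add: ennreal_mult)
  qed
  have "modular (lebesgue_on (\<Omega> \<times> \<Omega>)) (kernel_integrand \<phi> a) (pair_diff w) \<le> ennreal (\<beta> * c1) * (J pm + J pp)"
    unfolding J_def by (rule modular_kernel_le_powr_integrals[OF w])
  also have "\<dots> \<le> ennreal (\<beta> * c1) * (ennreal (2 powr pp * (2 * (\<epsilon> * kernel_mass)))
      + ennreal (2 powr pp * (2 * (\<epsilon> * kernel_mass))))"
    using J by (intro add_mono mult_left_mono) auto
  also have "\<dots> = ennreal (\<beta> * c1 * (4 * 2 powr pp * kernel_mass * \<epsilon>))"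
    using parameter_bounds \<epsilon> kernel_mass(2)
    by (simp add: ennreal_mult[symmetric] ennreal_plus[symmetric] del: ennreal_plus)
  finally show ?thesis .
qed

text \<open>Dividing \<open>u\<close> by \<open>K (\<parallel>u\<parallel>\<^sub>p\<^sub>+ + \<parallel>u\<parallel>\<^sub>p\<^sub>-) + e\<close> makes both \<open>L\<^sub>p\<close> integrals at most \<open>1 / K\<close>,
  and then the modular at most 1.\<close>
lemma seminorm_p_le_Lp_norms:
  assumes u: "u \<in> borel_measurable (lebesgue_on \<Omega>)"
  shows "seminorm_p \<Omega> \<phi> a u
    \<le> ennreal (max 1 (\<beta> * c1 * (4 * 2 powr pp * kernel_mass))) * (Lp_norm \<Omega> pp u + Lp_norm \<Omega> pm u)"
    (is "_ \<le> ennreal ?K * _")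
proof (cases "Lp_norm \<Omega> pp u = top \<or> Lp_norm \<Omega> pm u = top")
  case False
  then obtain A B where A: "Lp_norm \<Omega> pp u = ennreal A" "A \<ge> 0" and B: "Lp_norm \<Omega> pm u = ennreal B" "B \<ge> 0"
    by (cases "Lp_norm \<Omega> pp u"; cases "Lp_norm \<Omega> pm u") auto
  obtain u' where u': "u' \<in> borel_measurable borel" "AE x in lebesgue_on \<Omega>. u x = u' x"
    using lebesgue_on_measurable_AE_eq_borel[OF domain_sets(2) u] by blast
  have "Lp_norm \<Omega> pp u' = ennreal A" "Lp_norm \<Omega> pm u' = ennreal B"
    using Lp_norm_cong_AE[OF domain_sets(2) u'(2)] A B by simp_all
  have "seminorm_p \<Omega> \<phi> a u' \<le> ennreal (?K * (A + B))"
    unfolding seminorm_p_eq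
  proof (rule luxemburg_le_epsilon)
    show "0 \<le> ?K * (A + B)" using A B by simp
    fix e :: real assume "e > 0"
    define l where "l = ?K * (A + B) + e"
    have "A + B \<le> ?K * (A + B)" using A B by (simp add: mult_le_cancel_right1)
    then have l: "l > 0" "A + B \<le> l" "(A + B) / l \<le> 1 / ?K"
      using A B \<open>e > 0\<close> unfolding l_def by (auto simp: field_simps)
    have small: "Lp_integral \<Omega> q (\<lambda>x. u' x / complex_of_real l) \<le> ennreal (1 / ?K)"
      if "q \<ge> 1" "Lp_norm \<Omega> q u' = ennreal N" "0 \<le> N" "N \<le> A + B" for q N
    proof -
      have "Lp_integral \<Omega> q (\<lambda>x. u' x / complex_of_real l) \<le> ennreal (N / l)"
        using that l by (intro Lp_integral_divide_le borel_measurable_lebesgue_on_if_borel u'(1)) auto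
      also have "N / l \<le> 1 / ?K"
        using that l by (meson divide_right_mono less_imp_le order_trans)
      finally show ?thesis by (simp add: ennreal_leI)
    qed
    have "(\<lambda>z. pair_diff u' z / l) = pair_diff (\<lambda>x. u' x / complex_of_real l)"
      by (rule ext, rule pair_diff_divide[OF l(1), symmetric])
    then have "modular (lebesgue_on (\<Omega> \<times> \<Omega>)) (kernel_integrand \<phi> a) (\<lambda>z. pair_diff u' z / l)
        = modular (lebesgue_on (\<Omega> \<times> \<Omega>)) (kernel_integrand \<phi> a) (pair_diff (\<lambda>x. u' x / complex_of_real l))"
      by (rule arg_cong)
    also have "\<dots> \<le> ennreal (\<beta> * c1 * (4 * 2 powr pp * kernel_mass * (1 / ?K)))"
      using small[of pm B] small[of pp A] parameter_bounds A B u'(1) \<open>Lp_norm \<Omega> pp u' = ennreal A\<close>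
        \<open>Lp_norm \<Omega> pm u' = ennreal B\<close>
      by (intro modular_kernel_le) auto
    also have "\<dots> \<le> 1" by (simp add: ennreal_le_1 field_simps)
    finally show "modular (lebesgue_on (\<Omega> \<times> \<Omega>)) (kernel_integrand \<phi> a) (\<lambda>z. pair_diff u' z / (?K * (A + B) + e))
        \<le> 1" unfolding l_def .
  qed
  then show ?thesis
    using seminorm_p_cong_AE[OF u'(2)] A B by (simp add: ennreal_mult ennreal_plus[symmetric] del: ennreal_plus)
qed (auto simp: ennreal_mult_top)

lemma fnorm_triangle:
  assumes "u \<in> Lspace \<Omega> \<phi> a pm" "v \<in> Lspace \<Omega> \<phi> a pm"
  shows "fnorm \<Omega> \<phi> a pm (\<lambda>x. u x + v x) \<le> fnorm \<Omega> \<phi> a pm u + fnorm \<Omega> \<phi> a pm v"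
proof -
  have "u \<in> Lp_space \<Omega> pm" "v \<in> Lp_space \<Omega> pm" using assms Lspace_subset_Lp_space by blast+
  then have "fnorm \<Omega> \<phi> a pm (\<lambda>x. u x + v x)
      \<le> (seminorm_p \<Omega> \<phi> a u + seminorm_p \<Omega> \<phi> a v) + (Lp_norm \<Omega> pm u + Lp_norm \<Omega> pm v)"
    unfolding fnorm_def using parameter_bounds
    by (intro add_mono seminorm_p_triangle Lp_norm_triangle) (auto simp: Lp_space_def)
  then show ?thesis by (simp add: fnorm_def ac_simps)
qed

lemma fnorm_cmult:
  assumes "u \<in> borel_measurable (lebesgue_on \<Omega>)"
  shows "fnorm \<Omega> \<phi> a pm (\<lambda>x. c * u x) = ennreal (cmod c) * fnorm \<Omega> \<phi> a pm u"
  unfolding fnorm_def seminorm_p_cmult using Lp_norm_cmult[OF domain_sets(2) _ assms] parameter_bounds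
  by (simp add: distrib_left)

lemma fnorm_cong_AE:
  assumes "AE x in lebesgue_on \<Omega>. u x = v x"
  shows "fnorm \<Omega> \<phi> a pm u = fnorm \<Omega> \<phi> a pm v"
  unfolding fnorm_def using seminorm_p_cong_AE[OF assms] Lp_norm_cong_AE[OF domain_sets(2) assms] by simp

lemma fnorm_eq_0_iff:
  assumes "u \<in> borel_measurable (lebesgue_on \<Omega>)"
  shows "fnorm \<Omega> \<phi> a pm u = 0 \<longleftrightarrow> (AE x in lebesgue_on \<Omega>. u x = 0)"
  unfolding fnorm_def using seminorm_p_eq_0 Lp_norm_eq_0_iff[OF domain_sets(2) _ assms] parameter_bounds by auto

lemma Lspace_zero: "(\<lambda>x. 0) \<in> Lspace \<Omega> \<phi> a pm"
  unfolding Lspace_iff using fnorm_eq_0_iff[of "\<lambda>x. 0"] by simp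

lemma Lspace_add:
  assumes "u \<in> Lspace \<Omega> \<phi> a pm" "v \<in> Lspace \<Omega> \<phi> a pm"
  shows "(\<lambda>x. u x + v x) \<in> Lspace \<Omega> \<phi> a pm"
  using assms fnorm_triangle[OF assms] unfolding Lspace_iff
  by (auto intro: order.strict_trans1 simp: ennreal_add_less_top)

lemma Lspace_cmult:
  assumes "u \<in> Lspace \<Omega> \<phi> a pm"
  shows "(\<lambda>x. c * u x) \<in> Lspace \<Omega> \<phi> a pm"
proof -
  have u: "u \<in> borel_measurable (lebesgue_on \<Omega>)" "fnorm \<Omega> \<phi> a pm u < top"
    using assms unfolding Lspace_iff by auto
  then have "(\<lambda>x. c * u x) \<in> borel_measurable (lebesgue_on \<Omega>)" by measurable
  then show ?thesis using u fnorm_cmult[OF u(1)] unfolding Lspace_iff by (simp add: ennreal_mult_less_top)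
qed

lemma Lspace_diff:
  assumes "u \<in> Lspace \<Omega> \<phi> a pm" "v \<in> Lspace \<Omega> \<phi> a pm"
  shows "(\<lambda>x. u x - v x) \<in> Lspace \<Omega> \<phi> a pm"
  using Lspace_add[OF assms(1) Lspace_cmult[OF assms(2), of "-1"]] by simp

lemma fnorm_le_if_AE_limit:
  assumes W: "\<And>k. W k \<in> Lspace \<Omega> \<phi> a pm" and w: "w \<in> borel_measurable (lebesgue_on \<Omega>)"
    and lim: "AE x in lebesgue_on \<Omega>. (\<lambda>k. W k x) \<longlonglongrightarrow> w x" and e: "e > 0"
    and less: "\<forall>\<^sub>F k in sequentially. fnorm \<Omega> \<phi> a pm (W k) < ennreal e"
  shows "fnorm \<Omega> \<phi> a pm w \<le> ennreal (2 * e)"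
proof -
  have W_meas: "W k \<in> borel_measurable (lebesgue_on \<Omega>)" for k using W unfolding Lspace_iff by blast
  have W_Lp: "W k \<in> Lp_space \<Omega> pm" for k using W Lspace_subset_Lp_space by blast
  have "\<forall>\<^sub>F k in sequentially. seminorm_p \<Omega> \<phi> a (W k) < ennreal e"
    using less by eventually_elim (rule order.strict_trans1[OF seminorm_p_le_fnorm])
  then have "seminorm_p \<Omega> \<phi> a w \<le> ennreal e" by (rule seminorm_p_Fatou[OF W_Lp lim e])
  have "pm > 0" using parameter_bounds by simp
  have "Lp_norm \<Omega> pm w \<le> ennreal e"
    unfolding Lp_norm_eq_luxemburg[OF domain_sets(2) \<open>pm > 0\<close> w] using parameter_bounds
  proof (intro luxemburg_Fatou[OF orlicz_integrand_powr e])
    show "AE x in lebesgue_on \<Omega>. (\<lambda>k. cmod (W k x)) \<longlonglongrightarrow> cmod (w x)"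
      using lim by eventually_elim (rule tendsto_norm)
    show "(\<lambda>x. (cmod (W k x) / e) powr pm) \<in> borel_measurable (lebesgue_on \<Omega>)" for k
      using W_meas[of k] by measurable
    show "\<forall>\<^sub>F k in sequentially. luxemburg (lebesgue_on \<Omega>) (\<lambda>t z. t powr pm) (\<lambda>x. cmod (W k x)) < ennreal e"
    proof -
      have "\<forall>\<^sub>F k in sequentially. Lp_norm \<Omega> pm (W k) < ennreal e"
        using less by eventually_elim (rule order.strict_trans1[OF Lp_norm_le_fnorm])
      then show ?thesis by (simp add: Lp_norm_eq_luxemburg[OF domain_sets(2) \<open>pm > 0\<close> W_meas])
    qed
  qed auto
  with \<open>seminorm_p \<Omega> \<phi> a w \<le> ennreal e\<close> have "fnorm \<Omega> \<phi> a pm w \<le> ennreal e + ennreal e"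
    unfolding fnorm_def by (rule add_mono)
  also have "ennreal e + ennreal e = ennreal (2 * e)" using e by (metis ennreal_plus less_imp_le mult_2)
  finally show ?thesis .
qed

lemma Lspace_Cauchy_AE_convergent_subseq:
  assumes U: "\<And>n. U n \<in> Lspace \<Omega> \<phi> a pm"
    and N: "\<And>e m n. e > 0 \<Longrightarrow> m \<ge> N e \<Longrightarrow> n \<ge> N e \<Longrightarrow>
      fnorm \<Omega> \<phi> a pm (\<lambda>x. U m x - U n x) < ennreal e"
  obtains r where "\<And>k. k \<le> r k" and "AE x in lebesgue_on \<Omega>. convergent (\<lambda>k. U (r k) x)"
proof -
  define r where "r k = (\<Sum>j\<le>k. N ((1/2)^j)) + k" for k
  have r: "N ((1/2)^k) \<le> r k" "k \<le> r k" "r k \<le> r (Suc k)" for k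
    unfolding r_def using member_le_sum[of k "{..k}" "\<lambda>j. N ((1/2)^j)"] by auto
  have meas: "U (r k) \<in> borel_measurable (lebesgue_on \<Omega>)" for k using U unfolding Lspace_iff by blast
  have "fnorm \<Omega> \<phi> a pm (\<lambda>x. U (r (Suc k)) x - U (r k) x) < ennreal ((1/2)^k)" for k
    using r[of k] by (intro N) auto
  then have fast: "Lp_norm \<Omega> pm (\<lambda>x. U (r (Suc k)) x - U (r k) x) \<le> ennreal ((1/2)^k)" for k
    using Lp_norm_le_fnorm order.strict_trans1 less_imp_le by metis
  have "AE x in lebesgue_on \<Omega>. convergent (\<lambda>k. U (r k) x)"
    by (rule AE_convergent_if_Lp_fast_Cauchy[OF domain_sets(2) _ meas fast]) (use parameter_bounds in auto)
  with r(2) that show ?thesis by blast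
qed

lemma Lspace_complete:
  assumes U: "\<And>n. U n \<in> Lspace \<Omega> \<phi> a pm"
    and Cauchy: "\<forall>e>0. \<exists>N. \<forall>m\<ge>N. \<forall>n\<ge>N. fnorm \<Omega> \<phi> a pm (\<lambda>x. U m x - U n x) < ennreal e"
  shows "\<exists>u\<in>Lspace \<Omega> \<phi> a pm. (\<lambda>n. fnorm \<Omega> \<phi> a pm (\<lambda>x. U n x - u x)) \<longlonglongrightarrow> 0"
proof -
  obtain N where N: "\<And>e m n. e > 0 \<Longrightarrow> m \<ge> N e \<Longrightarrow> n \<ge> N e \<Longrightarrow>
      fnorm \<Omega> \<phi> a pm (\<lambda>x. U m x - U n x) < ennreal e"
    using Cauchy by metis
  obtain r where r: "\<And>k. k \<le> r k" and "AE x in lebesgue_on \<Omega>. convergent (\<lambda>k. U (r k) x)"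
    using Lspace_Cauchy_AE_convergent_subseq[where U = U and N = N, OF U N] by blast
  then have lim: "AE x in lebesgue_on \<Omega>. (\<lambda>k. U (r k) x) \<longlonglongrightarrow> lim (\<lambda>k. U (r k) x)"
    by (auto simp: convergent_LIMSEQ_iff elim: eventually_mono)
  define u where "u x = lim (\<lambda>k. U (r k) x)" for x
  have U_meas: "U n \<in> borel_measurable (lebesgue_on \<Omega>)" for n using U unfolding Lspace_iff by blast
  then have u_meas: "u \<in> borel_measurable (lebesgue_on \<Omega>)" unfolding u_def by measurable
  have bound: "fnorm \<Omega> \<phi> a pm (\<lambda>x. U m x - u x) \<le> ennreal (2 * e)" if "e > 0" "m \<ge> N e" for e m
  proof (rule fnorm_le_if_AE_limit[of "\<lambda>k x. U m x - U (r k) x"])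
    show "AE x in lebesgue_on \<Omega>. (\<lambda>k. U m x - U (r k) x) \<longlonglongrightarrow> U m x - u x"
      using lim unfolding u_def by eventually_elim (intro tendsto_intros)
    show "\<forall>\<^sub>F k in sequentially. fnorm \<Omega> \<phi> a pm (\<lambda>x. U m x - U (r k) x) < ennreal e"
      unfolding eventually_sequentially using that r by (metis N le_trans)
    show "(\<lambda>x. U m x - U (r k) x) \<in> Lspace \<Omega> \<phi> a pm" for k by (rule Lspace_diff[OF U U])
    show "(\<lambda>x. U m x - u x) \<in> borel_measurable (lebesgue_on \<Omega>)" using U_meas u_meas by measurable
  qed (use that in simp)
  have "fnorm \<Omega> \<phi> a pm (\<lambda>x. U (N 1) x - u x) \<le> ennreal (2 * 1)" by (rule bound) auto
  then have "fnorm \<Omega> \<phi> a pm (\<lambda>x. U (N 1) x - u x) < top" by (rule le_less_trans) simp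
  moreover have "(\<lambda>x. U (N 1) x - u x) \<in> borel_measurable (lebesgue_on \<Omega>)"
    using U_meas u_meas by measurable
  ultimately have "(\<lambda>x. U (N 1) x - u x) \<in> Lspace \<Omega> \<phi> a pm" unfolding Lspace_iff by simp
  from Lspace_diff[OF U[of "N 1"] this] have "u \<in> Lspace \<Omega> \<phi> a pm" by simp
  moreover have "(\<lambda>n. fnorm \<Omega> \<phi> a pm (\<lambda>x. U n x - u x)) \<longlonglongrightarrow> 0"
  proof (rule ennreal_LIMSEQ_0_if_eventually_le)
    fix e :: real assume "e > 0"
    then show "\<forall>\<^sub>F n in sequentially. fnorm \<Omega> \<phi> a pm (\<lambda>x. U n x - u x) \<le> ennreal e"
      using bound[of "e / 2"] unfolding eventually_sequentially by auto
  qed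
  ultimately show ?thesis by blast
qed

lemma Lp_spaces_inter_subset_Lspace:
  assumes "u \<in> Lp_space \<Omega> pp \<inter> Lp_space \<Omega> pm"
  shows "u \<in> Lspace \<Omega> \<phi> a pm"
    and "fnorm \<Omega> \<phi> a pm u \<le> ennreal (max 1 (\<beta> * c1 * (4 * 2 powr pp * kernel_mass)) + 1)
      * (Lp_norm \<Omega> pp u + Lp_norm \<Omega> pm u)" (is "_ \<le> ennreal (?K + 1) * ?N")
proof -
  have u: "u \<in> borel_measurable (lebesgue_on \<Omega>)" "Lp_norm \<Omega> pp u < top" "Lp_norm \<Omega> pm u < top"
    using assms unfolding Lp_space_def by auto
  have "fnorm \<Omega> \<phi> a pm u \<le> ennreal ?K * ?N + ?N"
    unfolding fnorm_def using seminorm_p_le_Lp_norms[OF u(1)] by (intro add_mono) auto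
  also have "\<dots> = ennreal (?K + 1) * ?N" by (simp add: distrib_right ennreal_plus)
  finally show bound: "fnorm \<Omega> \<phi> a pm u \<le> ennreal (?K + 1) * ?N" .
  have "ennreal (?K + 1) * ?N < top" using u by (simp add: ennreal_mult_less_top)
  with bound have "fnorm \<Omega> \<phi> a pm u < top" by (rule le_less_trans)
  with u(1) show "u \<in> Lspace \<Omega> \<phi> a pm" unfolding Lspace_iff by simp
qed

end

theorem theorem2p1:
  fixes \<Omega> :: "'a::euclidean_space set"
    and \<phi> :: "real \<Rightarrow> 'a \<Rightarrow> 'a \<Rightarrow> real"
    and a :: "'a \<Rightarrow> real"
    and r c0 pm pp \<beta> c1 :: real
  assumes "open \<Omega>"
    and a_L1: "integrable lborel a"
    and a_nonneg: "AE z in lborel. a z \<ge> 0"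
    and "r > 0" and "c0 > 0"
    and a_ball: "AE z in lborel. z \<in> ball 0 r \<longrightarrow> a z \<ge> c0"
    and components: "\<not> connected \<Omega> \<Longrightarrow>
       \<exists>(C :: nat \<Rightarrow> 'a set) (N :: enat). inj_on C {i. enat i < N} \<and>
          components \<Omega> = C ` {i. enat i < N} \<and>
          (\<forall>i. enat (Suc i) < N \<longrightarrow> setdist (C i) (C (Suc i)) < diameter (ball (0::'a) r))"
    and phi_nonneg: "\<forall>t\<ge>0. \<forall>x\<in>\<Omega>. \<forall>y\<in>\<Omega>. \<phi> t x y \<ge> 0"
    and C1: "cond_C1 \<Omega> \<phi>"
    and C2: "cond_C2 \<Omega> \<phi>"
    and C3: "cond_C3 \<Omega> \<phi> pm pp \<beta>"
    and C4: "cond_C4 \<Omega> \<phi> c1"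
  shows
    \<comment> \<open>L(Omega) is a complex vector space\<close>
    "(\<lambda>x. 0) \<in> Lspace \<Omega> \<phi> a pm
     \<and> (\<forall>u\<in>Lspace \<Omega> \<phi> a pm. \<forall>v\<in>Lspace \<Omega> \<phi> a pm. (\<lambda>x. u x + v x) \<in> Lspace \<Omega> \<phi> a pm)
     \<and> (\<forall>u\<in>Lspace \<Omega> \<phi> a pm. \<forall>c::complex. (\<lambda>x. c * u x) \<in> Lspace \<Omega> \<phi> a pm)
     \<comment> \<open>f is a norm on L(Omega) (functions identified a.e. on Omega)\<close>
     \<and> (\<forall>u\<in>Lspace \<Omega> \<phi> a pm. \<forall>v\<in>Lspace \<Omega> \<phi> a pm. (AE x in lebesgue_on \<Omega>. u x = v x) \<longrightarrow>
          fnorm \<Omega> \<phi> a pm u = fnorm \<Omega> \<phi> a pm v)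
     \<and> (\<forall>u\<in>Lspace \<Omega> \<phi> a pm. fnorm \<Omega> \<phi> a pm u = 0 \<longleftrightarrow> (AE x in lebesgue_on \<Omega>. u x = 0))
     \<and> (\<forall>u\<in>Lspace \<Omega> \<phi> a pm. \<forall>c::complex.
          fnorm \<Omega> \<phi> a pm (\<lambda>x. c * u x) = ennreal (cmod c) * fnorm \<Omega> \<phi> a pm u)
     \<and> (\<forall>u\<in>Lspace \<Omega> \<phi> a pm. \<forall>v\<in>Lspace \<Omega> \<phi> a pm.
          fnorm \<Omega> \<phi> a pm (\<lambda>x. u x + v x) \<le> fnorm \<Omega> \<phi> a pm u + fnorm \<Omega> \<phi> a pm v)
     \<comment> \<open>completeness (Banach space)\<close>
     \<and> (\<forall>U :: nat \<Rightarrow> 'a \<Rightarrow> complex. (\<forall>n. U n \<in> Lspace \<Omega> \<phi> a pm) \<and>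
          (\<forall>e>0. \<exists>N. \<forall>m\<ge>N. \<forall>n\<ge>N. fnorm \<Omega> \<phi> a pm (\<lambda>x. U m x - U n x) < ennreal e) \<longrightarrow>
          (\<exists>u\<in>Lspace \<Omega> \<phi> a pm. (\<lambda>n. fnorm \<Omega> \<phi> a pm (\<lambda>x. U n x - u x)) \<longlonglongrightarrow> 0))
     \<comment> \<open>continuous embedding of L_{p+} \<inter> L_{p-} into L(Omega)\<close>
     \<and> (\<exists>C::real. C > 0 \<and> (\<forall>u \<in> Lp_space \<Omega> pp \<inter> Lp_space \<Omega> pm.
          u \<in> Lspace \<Omega> \<phi> a pm \<and>
          fnorm \<Omega> \<phi> a pm u \<le> ennreal C * (Lp_norm \<Omega> pp u + Lp_norm \<Omega> pm u)))
     \<comment> \<open>continuous embedding of L(Omega) into L_{p-}\<close>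
     \<and> (\<exists>C::real. C > 0 \<and> (\<forall>u \<in> Lspace \<Omega> \<phi> a pm.
          u \<in> Lp_space \<Omega> pm \<and> Lp_norm \<Omega> pm u \<le> ennreal C * fnorm \<Omega> \<phi> a pm u))"
proof -
  interpret nonlocal_functional \<Omega> \<phi> a pm pp \<beta> c1
    using \<open>open \<Omega>\<close> a_L1 phi_nonneg C1 C2 C3 C4 by unfold_locales
  have meas: "u \<in> borel_measurable (lebesgue_on \<Omega>)" if "u \<in> Lspace \<Omega> \<phi> a pm" for u
    using that unfolding Lspace_iff by blast
  have "\<exists>C::real. C > 0 \<and> (\<forall>u \<in> Lp_space \<Omega> pp \<inter> Lp_space \<Omega> pm. u \<in> Lspace \<Omega> \<phi> a pm \<and>
      fnorm \<Omega> \<phi> a pm u \<le> ennreal C * (Lp_norm \<Omega> pp u + Lp_norm \<Omega> pm u))"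
    using Lp_spaces_inter_subset_Lspace
    by (intro exI[of _ "max 1 (\<beta> * c1 * (4 * 2 powr pp * kernel_mass)) + 1"]) auto
  moreover have "\<exists>C::real. C > 0 \<and> (\<forall>u \<in> Lspace \<Omega> \<phi> a pm.
      u \<in> Lp_space \<Omega> pm \<and> Lp_norm \<Omega> pm u \<le> ennreal C * fnorm \<Omega> \<phi> a pm u)"
    using subsetD[OF Lspace_subset_Lp_space] Lp_norm_le_fnorm by (intro exI[of _ 1]) auto
  ultimately show ?thesis
    by (simp add: Lspace_zero Lspace_add Lspace_cmult fnorm_cong_AE fnorm_eq_0_iff meas fnorm_cmult
      fnorm_triangle Lspace_complete)
qed

end
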